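(* Let $N>2$, $1<p<N$, and assume (H1)–(H4). For $a>0$ let $v_a$ be the solution on $[0,T]$ of $$(|v'(t)|^{p-2}v'(t))'+h(t)f(v(t))=0,\qquad v(0)=0,\ v'(0)=a.$$ Then for all sufficiently large $a$, $v_a$ has a first zero $z_a$ with $0<z_a<T$ (i.e. $v_a(z_a)=0$ and $v_a>0$ on $(0,z_a)$), and $z_a\to 0$ as $a\to\infty$.
   Context: Standing hypotheses. $f:\mathbb{R}\setminus\{0\}\to\mathbb{R}$ is odd and locally Lipschitz, and: (H1) there is a locally Lipschitz $g_1:\mathbb{R}\to\mathbb{R}$ and $l>p-1$ with $f(u)=|u|^{l-1}u+g_1(u)$ for all large $|u|$, and $\lim_{u\to\infty}|g_1(u)|/|u|^l=0$; (H2) there is a locally Lipschitz $g_2:\mathbb{R}\to\mathbb{R}$ with $g_2(0)=0$ and $0<m<1$ such that $f(u)=-\frac{1}{|u|^{m-1}u}+g_2(u)$ for all small $|u|\neq 0$; (H3) $f$ has a unique positive zero $\beta$, with $f<0$ on $(0,\beta)$ and $f>0$ on $(\beta,\infty)$; (H4) $K>0$ and $K'$ are continuous on $[R,\infty)$ (for a fixed $R>0$), $\frac{rK'(r)}{K(r)}>-\frac{(N-1)p}{p-1}$ on $[R,\infty)$, and there are constants $K_0,K_1>0$ with $\frac{K_0}{r^{\alpha}}\le K(r)\le \frac{K_1}{r^{\alpha_1}}$ on $[R,\infty)$, where $N+\frac{m(N-p)}{p-1}<\alpha_1\le\alpha<2(N-1)$. Notation: $T=R^{\frac{p-N}{p-1}}$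 and, for $0<t\le T$, $h(t)=\left(\frac{N-p}{p-1}\right)^{-p}t^{\frac{p(N-1)}{p-N}}K\!\left(t^{\frac{p-1}{p-N}}\right)>0$. A solution of the initial value problem on an interval $[0,d]$ means $v\in C^1[0,d]$ such that $t\mapsto h(t)f(v(t))$ is integrable on $(0,t)$ for each $t\le d$ and $|v'(t)|^{p-2}v'(t)=a^{p-1}-\int_0^t h(s)f(v(s))\,ds$, $v(0)=0$; it exists uniquely on $[0,T]$ for each $a>0$. *)

theory Defs
  imports "HOL-Analysis.Analysis"
begin

definition loc_lipschitz_on :: "real set \<Rightarrow> (real \<Rightarrow> real) \<Rightarrow> bool" where
  "loc_lipschitz_on S g \<longleftrightarrow>
     (\<forall>x\<in>S. \<exists>e>0. \<exists>L. L-lipschitz_on (cball x e \<inter> S) g)"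

definition T_of :: "real \<Rightarrow> real \<Rightarrow> real \<Rightarrow> real" where
  "T_of N p R = R powr ((p - N) / (p - 1))"

definition h_of :: "real \<Rightarrow> real \<Rightarrow> (real \<Rightarrow> real) \<Rightarrow> real \<Rightarrow> real" where
  "h_of N p K t = ((N - p) / (p - 1)) powr (- p) * t powr (p * (N - 1) / (p - N))
                  * K (t powr ((p - 1) / (p - N)))"

definition is_sol ::
  "real \<Rightarrow> (real \<Rightarrow> real) \<Rightarrow> (real \<Rightarrow> real) \<Rightarrow> real \<Rightarrow> real \<Rightarrow> (real \<Rightarrow> real) \<Rightarrow> bool" where
  "is_sol p h f a d v \<longleftrightarrow>
     (\<exists>v'. continuous_on {0..d} v' \<and>
        (\<forall>t\<in>{0..d}. (v has_real_derivative v' t) (at t within {0..d})) \<and>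
        v 0 = 0 \<and>
        (\<forall>t\<in>{0..d}. (\<lambda>s. h s * f (v s)) integrable_on {0..t} \<and>
           \<bar>v' t\<bar> powr (p - 2) * v' t = a powr (p - 1) - integral {0..t} (\<lambda>s. h s * f (v s))))"

end

theory Submission
  imports Defs
begin

text \<open>Write \<phi>(v') = |v'|^(p-2) v' (the flux); the equation says that the flux decreases at
  rate h f(v). For a large slope a, v reaches \<beta> within time O(1/a) with flux still above
  a^(p-1) and keeps rising, so its maximum A is large. Once v \<ge> A/2 the superlinear growth
  f(u) \<ge> u^l/2 with l > p - 1 makes the flux decay at a rate of order A^l, hence both the rest
  of the rise and the fall back to \<beta> take time O(A^((p-1-l)/p)). When v passes \<beta> downwards,
  the flux is below -g with g^(p/(p-1)) of order A^(l+1), and at speed g^(1/(p-1)) v reaches 0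
  quickly unless the flux recovers half of its value. While v descends linearly, however, the
  singular part -u^(-m) of f is integrable (m < 1), so such a recovery forces g^(p/(p-1)) to stay
  bounded, which fails for large A. For a large in terms of \<epsilon> all stages fit into
  (0, \<epsilon>], so v vanishes before \<epsilon>.\<close>

section \<open>Crossing times and elementary bounds\<close>

lemma first_crossing_below:
  fixes g :: "real \<Rightarrow> real"
  assumes "a \<le> b" and cont: "continuous_on {a..b} g" and start: "c < g a" and "g b \<le> c"
  shows "\<exists>\<tau>. a < \<tau> \<and> \<tau> \<le> b \<and> g \<tau> = c \<and> (\<forall>t. a \<le> t \<and> t < \<tau> \<longrightarrow> c < g t)"
proof -
  define S where "S = {a..b} \<inter> g -` {..c}"
  have bdd: "bdd_below S" unfolding S_def by (rule bdd_belowI[of _ a]) auto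
  have "closed S" unfolding S_def by (rule continuous_closed_preimage[OF cont]) auto
  moreover have "b \<in> S" using assms by (simp add: S_def)
  ultimately have \<tau>: "Inf S \<in> S" using closed_contains_Inf bdd by blast
  have before: "c < g t" if "a \<le> t" "t < Inf S" for t
    using that cInf_lower[OF _ bdd, of t] \<tau> by (force simp: S_def)
  have "a < Inf S" using \<tau> start by (auto simp: S_def order.order_iff_strict)
  moreover have "c \<le> g (Inf S)"
  proof (rule ccontr)
    assume "\<not> c \<le> g (Inf S)"
    moreover have "continuous_on {a..Inf S} g" using \<tau> by (auto simp: S_def intro: continuous_on_subset[OF cont])
    ultimately obtain t where "a \<le> t" "t \<le> Inf S" "g t = c"
      using IVT2'[of g "Inf S" c a] \<tau> start by (auto simp: S_def)
    then show False using before[of t] \<open>\<not> c \<le> g (Inf S)\<close> by (cases "t = Inf S") auto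
  qed
  ultimately show ?thesis using \<tau> before by (intro exI[of _ "Inf S"]) (auto simp: S_def)
qed

lemma first_crossing_above:
  fixes g :: "real \<Rightarrow> real"
  assumes "a \<le> b" and "continuous_on {a..b} g" and "g a < c" and "c \<le> g b"
  shows "\<exists>\<tau>. a < \<tau> \<and> \<tau> \<le> b \<and> g \<tau> = c \<and> (\<forall>t. a \<le> t \<and> t < \<tau> \<longrightarrow> g t < c)"
  using first_crossing_below[of a b "\<lambda>t. - g t" "- c"] assms
  by (auto intro: continuous_intros)

lemma has_integral_powr_affine:
  fixes \<nu> w m s t :: real
  assumes "0 < \<nu>" and "0 < w" and "s \<le> t" and "m < 1"
  shows "((\<lambda>r. (\<nu> + w * (t - r)) powr (-m)) has_integral
          ((\<nu> + w * (t - s)) powr (1-m) - \<nu> powr (1-m)) / (w * (1-m))) {s..t}"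
proof -
  define F where "F r = - ((\<nu> + w * (t - r)) powr (1-m) / (w * (1-m)))" for r
  have "(F has_vector_derivative (\<nu> + w * (t - r)) powr (-m)) (at r within {s..t})"
    if "r \<in> {s..t}" for r
  proof -
    have pos: "0 < \<nu> + w * (t - r)" using that assms by (simp add: add_pos_nonneg)
    have "((\<lambda>r. \<nu> + w * (t - r)) has_real_derivative - w) (at r)"
      by (auto intro!: derivative_eq_intros)
    from DERIV_chain2[OF has_real_derivative_powr[OF pos, of "1-m"] this]
    have "(F has_real_derivative - ((1-m) * (\<nu> + w * (t - r)) powr (1 - m - 1) * (- w) / (w * (1-m)))) (at r)"
      unfolding F_def by (intro DERIV_minus DERIV_cdivide) simp
    moreover have "- ((1-m) * (\<nu> + w * (t - r)) powr (1 - m - 1) * (- w) / (w * (1-m)))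
        = (\<nu> + w * (t - r)) powr (-m)"
      using assms by (simp add: field_simps)
    ultimately show ?thesis
      by (simp add: has_real_derivative_iff_has_vector_derivative has_vector_derivative_at_within)
  qed
  from fundamental_theorem_of_calculus[OF \<open>s \<le> t\<close> this] show ?thesis
    by (simp add: F_def diff_divide_distrib)
qed

lemma powr_conjugate_le:
  fixes p g X :: real
  assumes "1 < p" and "0 \<le> g" and "X \<le> g powr (1 + 1/(p-1))" and "0 \<le> X"
  shows "X powr ((p-1)/p) \<le> g"
proof -
  have "X powr ((p-1)/p) \<le> (g powr (1 + 1/(p-1))) powr ((p-1)/p)"
    using assms by (intro powr_mono2) auto
  also have "\<dots> = g powr ((1 + 1/(p-1)) * ((p-1)/p))" by (simp add: powr_powr)
  also have "(1 + 1/(p-1)) * ((p-1)/p) = 1" using assms(1) by (simp add: field_simps)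
  finally show ?thesis using assms(2) by simp
qed

lemma powr_conjugate_ge:
  fixes p g X :: real
  assumes "1 < p" and "0 \<le> g" and "g powr (1 + 1/(p-1)) \<le> X"
  shows "g \<le> X powr ((p-1)/p)"
proof -
  have "(1 + 1/(p-1)) * ((p-1)/p) = 1" using assms(1) by (simp add: field_simps)
  then have "g = (g powr (1 + 1/(p-1))) powr ((p-1)/p)" using assms(2) by (simp add: powr_powr)
  also have "\<dots> \<le> X powr ((p-1)/p)" using assms by (intro powr_mono2) auto
  finally show ?thesis .
qed

lemma loc_lipschitz_on_continuous_on:
  assumes "loc_lipschitz_on S g" and "open S"
  shows "continuous_on S g"
  unfolding continuous_on_eq_continuous_at[OF assms(2)]
proof
  fix x assume x: "x \<in> S"
  then obtain e L where e: "e > 0" and "L-lipschitz_on (cball x e \<inter> S) g"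
    using assms(1) unfolding loc_lipschitz_on_def by blast
  then have "continuous_on (ball x e \<inter> S) g"
    by (meson lipschitz_on_continuous_on continuous_on_subset Int_mono ball_subset_cball order_refl)
  moreover have "open (ball x e \<inter> S)" "x \<in> ball x e \<inter> S" using e x assms(2) by auto
  ultimately show "isCont g x" using continuous_on_eq_continuous_at by blast
qed

definition phi_inv :: "real \<Rightarrow> real \<Rightarrow> real" where
  "phi_inv p g = sgn g * \<bar>g\<bar> powr (1 / (p - 1))"

lemma phi_inv_nonneg: "0 \<le> g \<Longrightarrow> phi_inv p g = g powr (1 / (p - 1))"
  by (cases "g = 0") (auto simp: phi_inv_def)

lemma phi_inv_nonpos: "g \<le> 0 \<Longrightarrow> phi_inv p g = - ((- g) powr (1 / (p - 1)))"
  by (cases "g = 0") (auto simp: phi_inv_def)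

lemma phi_inv_phi:
  assumes "1 < p"
  shows "phi_inv p (\<bar>y\<bar> powr (p - 2) * y) = y"
proof (cases "y = 0")
  case False
  have "\<bar>y\<bar> powr (p - 2) * y = sgn y * (\<bar>y\<bar> powr (p - 2) * \<bar>y\<bar> powr 1)"
    using False by (simp add: mult.left_commute sgn_mult_abs)
  also have "\<bar>y\<bar> powr (p - 2) * \<bar>y\<bar> powr 1 = \<bar>y\<bar> powr (p - 1)"
    by (simp only: powr_add[symmetric]) simp
  finally show ?thesis
    using False assms by (simp add: phi_inv_def abs_mult sgn_mult powr_powr sgn_mult_abs)
qed (simp add: phi_inv_def)

lemma phi_inv_mono:
  assumes "1 < p" and "g1 \<le> g2"
  shows "phi_inv p g1 \<le> phi_inv p g2"
proof -
  have e: "0 \<le> 1 / (p - 1)" using assms(1) by simp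
  consider "0 \<le> g1" | "g1 < 0" "0 \<le> g2" | "g2 < 0" using assms(2) by linarith
  then show ?thesis
  proof cases
    case 1
    then show ?thesis using assms(2) by (simp add: phi_inv_nonneg powr_mono2[OF e])
  next
    case 2
    then show ?thesis by (simp add: phi_inv_nonneg phi_inv_nonpos) (smt (verit) powr_ge_zero)
  next
    case 3
    then show ?thesis using assms(2) by (simp add: phi_inv_nonpos powr_mono2[OF e])
  qed
qed

lemma phi_inv_powr:
  assumes "1 < p" "0 < a"
  shows "phi_inv p (a powr (p - 1)) = a"
  using assms by (simp add: phi_inv_nonneg powr_powr)

section \<open>Transit time of a monotone arc\<close>

definition transit_bound :: "real \<Rightarrow> real \<Rightarrow> real \<Rightarrow> real" where
  "transit_bound p A \<kappa> =
     (A/2) / (\<kappa>*A/2) powr (1/p) + 2 * ((A/2) / \<kappa> powr (1/(p-1))) powr ((p-1)/p)"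

text \<open>Abstract rising phase: G plays the flux, so that v' = G^(1/(p-1)). The duration bound
  compares the decay of G above the half level with the height still to climb.\<close>
locale rising_arc =
  fixes p x y \<kappa> A :: real and G v :: "real \<Rightarrow> real"
  assumes p: "1 < p" and xy: "x \<le> y" and \<kappa>: "0 < \<kappa>" and A: "0 < A"
    and G_antimono: "\<And>s t. x \<le> s \<Longrightarrow> s \<le> t \<Longrightarrow> t \<le> y \<Longrightarrow> G t \<le> G s"
    and G_nonneg: "\<And>t. x \<le> t \<Longrightarrow> t \<le> y \<Longrightarrow> 0 \<le> G t"
    and increment: "\<And>s t. x \<le> s \<Longrightarrow> s \<le> t \<Longrightarrow> t \<le> y \<Longrightarrow>
       (t - s) * G t powr (1/(p-1)) \<le> v t - v s \<and> v t - v s \<le> (t - s) * G s powr (1/(p-1))"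
    and G_decay: "\<And>s t. x \<le> s \<Longrightarrow> s \<le> t \<Longrightarrow> t \<le> y \<Longrightarrow> A/2 \<le> v s \<Longrightarrow> \<kappa> * (t - s) \<le> G s - G t"
    and v_start: "0 \<le> v x" and v_end: "v y = A"
    and v_cont: "continuous_on {x..y} v"
begin

lemma G_at_half_level:
  assumes "x \<le> \<tau>" "\<tau> \<le> y" "v \<tau> = A/2"
  shows "(\<kappa>*A/2) powr ((p-1)/p) \<le> G \<tau>"
proof -
  define e where "e = 1/(p-1)"
  have G\<tau>: "0 \<le> G \<tau>" using G_nonneg assms by simp
  have "\<kappa> * A/2 \<le> \<kappa> * ((y - \<tau>) * G \<tau> powr e)"
    using increment[OF assms(1,2) order_refl] assms(3) v_end \<kappa> by (simp add: e_def)
  also have "\<dots> = (\<kappa> * (y - \<tau>)) * G \<tau> powr e" by simp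
  also have "\<dots> \<le> G \<tau> * G \<tau> powr e"
    using G_decay[OF assms(1,2) order_refl] assms(3) G_nonneg[of y] xy
    by (intro mult_right_mono) auto
  also have "\<dots> = G \<tau> powr (1 + e)"
    using G\<tau> by (cases "G \<tau> = 0") (auto simp: powr_add)
  finally show ?thesis using powr_conjugate_le[OF p G\<tau>] \<kappa> A by (simp add: e_def)
qed

lemma G_below_half_level:
  assumes "x \<le> t" "t \<le> y" "v t \<le> A/2"
  shows "(\<kappa>*A/2) powr ((p-1)/p) \<le> G t"
proof -
  have "continuous_on {t..y} v" using assms by (auto intro: continuous_on_subset[OF v_cont])
  then obtain \<tau> where \<tau>: "t \<le> \<tau>" "\<tau> \<le> y" "v \<tau> = A/2"
    using IVT'[of v t "A/2" y] assms v_end A by auto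
  have "(\<kappa>*A/2) powr ((p-1)/p) \<le> G \<tau>" using G_at_half_level \<tau> assms by simp
  also have "\<dots> \<le> G t" using G_antimono \<tau> assms by simp
  finally show ?thesis .
qed

lemma time_to_half_level:
  obtains \<tau> where "x \<le> \<tau>" "\<tau> \<le> y" "A/2 \<le> v \<tau>" "\<tau> - x \<le> (A/2) / (\<kappa>*A/2) powr (1/p)"
proof (cases "A/2 \<le> v x")
  case True
  then show ?thesis using that[of x] xy \<kappa> A by simp
next
  case False
  define W where "W = (\<kappa>*A/2) powr (1/p)"
  have W: "0 < W" using \<kappa> A by (simp add: W_def)
  obtain \<tau> where \<tau>: "x \<le> \<tau>" "\<tau> \<le> y" "v \<tau> = A/2"
    using IVT'[of v x "A/2" y] False xy v_end A v_cont by auto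
  have "W = ((\<kappa>*A/2) powr ((p-1)/p)) powr (1/(p-1))"
    using p by (simp add: W_def powr_powr)
  also have "\<dots> \<le> G \<tau> powr (1/(p-1))"
    using G_at_half_level[OF \<tau>] p by (intro powr_mono2) auto
  finally have "(\<tau> - x) * W \<le> (\<tau> - x) * G \<tau> powr (1/(p-1))"
    using \<tau> by (intro mult_left_mono) auto
  also have "\<dots> \<le> A/2" using increment[OF order_refl \<tau>(1,2)] \<tau> v_start by simp
  finally have "\<tau> - x \<le> (A/2) / W" using W by (simp add: field_simps)
  then show ?thesis using that[of \<tau>] \<tau> by (simp add: W_def)
qed

lemma time_above_half_level:
  assumes \<tau>: "x \<le> \<tau>" "\<tau> \<le> y" "A/2 \<le> v \<tau>"
  shows "y - \<tau> \<le> 2 * ((A/2) / \<kappa> powr (1/(p-1))) powr ((p-1)/p)"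
proof (cases "\<tau> = y")
  case False
  define e where "e = 1/(p-1)"
  define d where "d = (y - \<tau>)/2"
  define mid where "mid = (\<tau> + y)/2"
  have d: "0 < d" using \<tau> False by (simp add: d_def)
  have mid: "\<tau> \<le> mid" "mid \<le> y" "x \<le> mid" using \<tau> by (auto simp: mid_def)
  have "0 \<le> (mid - \<tau>) * G mid powr e" using mid by simp
  also have "\<dots> \<le> v mid - v \<tau>" using increment[OF \<tau>(1) mid(1,2)] by (simp add: e_def)
  finally have v_mid: "A/2 \<le> v mid" using \<tau> by simp
  have "0 \<le> (y - mid) * G y powr e" using mid by simp
  also have "\<dots> \<le> v y - v mid" using increment[OF mid(3,2) order_refl] by (simp add: e_def)
  finally have "v mid \<le> A" using v_end by simp
  have "\<kappa> * d \<le> G mid"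
    using G_decay[OF mid(3,2) order_refl v_mid] G_nonneg[of y] xy
    by (simp add: mid_def d_def field_simps)
  have "\<kappa> powr e * d powr (1 + e) = d * (\<kappa> * d) powr e"
    using d \<kappa> by (simp add: powr_mult powr_add)
  also have "\<dots> \<le> d * G mid powr e"
    using \<open>\<kappa> * d \<le> G mid\<close> d \<kappa> p by (intro mult_left_mono powr_mono2) (auto simp: e_def)
  also have "d * G mid powr e = (mid - \<tau>) * G mid powr e" by (simp add: mid_def d_def)
  also have "\<dots> \<le> v mid - v \<tau>" using increment[OF \<tau>(1) mid(1,2)] by (simp add: e_def)
  also have "\<dots> \<le> A/2" using \<open>v mid \<le> A\<close> \<tau> by simp
  finally have "d powr (1 + 1/(p-1)) \<le> (A/2) / \<kappa> powr (1/(p-1))"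
    using \<kappa> by (simp add: field_simps e_def)
  from powr_conjugate_ge[OF p _ this] d show ?thesis by (simp add: d_def)
qed simp

lemma transit_time_le: "y - x \<le> transit_bound p A \<kappa>"
proof -
  obtain \<tau> where \<tau>: "x \<le> \<tau>" "\<tau> \<le> y" "A/2 \<le> v \<tau>" "\<tau> - x \<le> (A/2) / (\<kappa>*A/2) powr (1/p)"
    by (rule time_to_half_level)
  then show ?thesis using time_above_half_level[OF \<tau>(1-3)] by (simp add: transit_bound_def)
qed

end

lemma falling_arc:
  fixes v G :: "real \<Rightarrow> real" and p x y \<kappa> A :: real
  assumes "1 < p" and "x \<le> y" and "0 < \<kappa>" and "0 < A"
    and G_antimono: "\<And>s t. x \<le> s \<Longrightarrow> s \<le> t \<Longrightarrow> t \<le> y \<Longrightarrow> G t \<le> G s"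
    and G_nonpos: "\<And>t. x \<le> t \<Longrightarrow> t \<le> y \<Longrightarrow> G t \<le> 0"
    and increment: "\<And>s t. x \<le> s \<Longrightarrow> s \<le> t \<Longrightarrow> t \<le> y \<Longrightarrow>
       - ((t - s) * (- G t) powr (1/(p-1))) \<le> v t - v s \<and> v t - v s \<le> - ((t - s) * (- G s) powr (1/(p-1)))"
    and G_decay: "\<And>s t. x \<le> s \<Longrightarrow> s \<le> t \<Longrightarrow> t \<le> y \<Longrightarrow> A/2 \<le> v t \<Longrightarrow> \<kappa> * (t - s) \<le> G s - G t"
    and "v x = A" and "0 \<le> v y"
    and v_cont: "continuous_on {x..y} v"
  shows "(\<forall>t. x \<le> t \<and> t \<le> y \<and> v t \<le> A/2 \<longrightarrow> (\<kappa>*A/2) powr ((p-1)/p) \<le> - G t)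
    \<and> y - x \<le> transit_bound p A \<kappa>"
proof -
  interpret reflected: rising_arc p "-y" "-x" \<kappa> A "\<lambda>t. - G (- t)" "\<lambda>t. v (- t)"
  proof
    show "- G (- t) \<le> - G (- s)" if "-y \<le> s" "s \<le> t" "t \<le> -x" for s t
      using G_antimono[of "-t" "-s"] that by auto
    show "0 \<le> - G (- t)" if "-y \<le> t" "t \<le> -x" for t using G_nonpos[of "-t"] that by auto
    show "(t - s) * (- G (- t)) powr (1 / (p - 1)) \<le> v (- t) - v (- s) \<and>
          v (- t) - v (- s) \<le> (t - s) * (- G (- s)) powr (1 / (p - 1))"
      if "-y \<le> s" "s \<le> t" "t \<le> -x" for s t
      using increment[of "-t" "-s"] that by auto
    show "\<kappa> * (t - s) \<le> - G (- s) - - G (- t)"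
      if "-y \<le> s" "s \<le> t" "t \<le> -x" "A/2 \<le> v (- s)" for s t
      using G_decay[of "-t" "-s"] that by auto
    show "continuous_on {- y..- x} (\<lambda>t. v (- t))"
      by (rule continuous_on_compose2[OF v_cont]) (auto intro: continuous_intros)
  qed (use assms in auto)
  have "(\<kappa>*A/2) powr ((p-1)/p) \<le> - G t" if "x \<le> t" "t \<le> y" "v t \<le> A/2" for t
    using reflected.G_below_half_level[of "-t"] that by simp
  then show ?thesis using reflected.transit_time_le by auto
qed

section \<open>Dependence on the amplitude\<close>

text \<open>Lower bound for h f(v) where h \<ge> c and v \<ge> A/2 \<ge> M1, since f(u) \<ge> u^l/2 there.\<close>
definition decay_rate :: "real \<Rightarrow> real \<Rightarrow> real \<Rightarrow> real" where
  "decay_rate l c A = c * (A/2) powr l / 2"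

text \<open>Lower bound for the speed of v while the flux stays below half of the level
  -(decay_rate l c A * A/2)^((p-1)/p), which it has passed when v falls back below A/2.\<close>
definition descent_speed :: "real \<Rightarrow> real \<Rightarrow> real \<Rightarrow> real \<Rightarrow> real" where
  "descent_speed p l c A = ((decay_rate l c A * A / 2) powr ((p-1)/p) / 2) powr (1/(p-1))"

lemma transit_bound_decay_rate:
  fixes p l c A :: real
  assumes p: "1 < p" and c: "0 < c" and A: "0 < A"
  shows "transit_bound p A (decay_rate l c A) = 3 * (c/2) powr (-1/p) * (A/2) powr ((p-1-l)/p)"
proof -
  define B where "B = A/2"
  define K where "K = c/2"
  have B: "0 < B" and K: "0 < K" using A c by (auto simp: B_def K_def)
  have rate: "decay_rate l c A = K * B powr l" by (simp add: decay_rate_def B_def K_def)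
  have kA: "decay_rate l c A * A / 2 = K * B powr (l+1)"
    using B by (simp add: rate B_def powr_add)
  have "(K * B powr (l+1)) powr (1/p) = K powr (1/p) * B powr ((l+1)/p)"
    using K B by (simp add: powr_mult powr_powr)
  moreover have "B / (K powr (1/p) * B powr ((l+1)/p)) = K powr (-1/p) * B powr (1 - (l+1)/p)"
    using K B by (simp add: powr_diff powr_minus_divide divide_inverse powr_minus)
  moreover have "1 - (l+1)/p = (p-1-l)/p" using p by (simp add: field_simps)
  ultimately have t1: "B / (decay_rate l c A * A / 2) powr (1/p) = K powr (-1/p) * B powr ((p-1-l)/p)"
    by (simp add: kA)
  have "(B / (K * B powr l) powr (1/(p-1))) powr ((p-1)/p)
        = (K powr (-1/(p-1)) * B powr (1 - l/(p-1))) powr ((p-1)/p)"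
    using K B by (simp add: powr_mult powr_powr powr_diff powr_minus_divide divide_inverse powr_minus)
  also have "\<dots> = K powr (-1/(p-1) * ((p-1)/p)) * B powr ((1 - l/(p-1)) * ((p-1)/p))"
    using K B by (simp add: powr_mult powr_powr)
  also have "-1/(p-1) * ((p-1)/p) = -1/p" using p by (simp add: field_simps)
  also have "(1 - l/(p-1)) * ((p-1)/p) = (p-1-l)/p" using p by (simp add: field_simps)
  finally have t2: "(B / (K * B powr l) powr (1/(p-1))) powr ((p-1)/p) = K powr (-1/p) * B powr ((p-1-l)/p)" .
  have "transit_bound p A (decay_rate l c A) = B / (decay_rate l c A * A / 2) powr (1/p)
        + 2 * (B / (K * B powr l) powr (1/(p-1))) powr ((p-1)/p)"
    unfolding transit_bound_def rate by (simp add: B_def)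
  also have "\<dots> = 3 * K powr (-1/p) * B powr ((p-1-l)/p)" unfolding t1 t2 by simp
  finally show ?thesis by (simp add: B_def K_def)
qed

lemma descent_speed_eq:
  fixes p l c A :: real
  assumes p: "1 < p" and c: "0 < c" and A: "0 < A"
  shows "descent_speed p l c A = (c/2) powr (1/p) * (A/2) powr ((l+1)/p) / 2 powr (1/(p-1))"
proof -
  define B where "B = A/2"
  define K where "K = c/2"
  have B: "0 < B" and K: "0 < K" using A c by (auto simp: B_def K_def)
  have "decay_rate l c A * A / 2 = K * B powr (l+1)"
    using B by (simp add: decay_rate_def B_def K_def powr_add)
  then have "descent_speed p l c A
       = (K powr ((p-1)/p * (1/(p-1))) * B powr ((l+1) * ((p-1)/p) * (1/(p-1)))) / 2 powr (1/(p-1))"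
    using K B by (simp add: descent_speed_def powr_mult powr_powr powr_divide)
  also have "(p-1)/p * (1/(p-1)) = 1/p" using p by (simp add: field_simps)
  also have "(l+1) * ((p-1)/p) * (1/(p-1)) = (l+1)/p" using p by (simp add: field_simps)
  finally show ?thesis by (simp add: K_def B_def)
qed

lemma filterlim_half_at_top: "filterlim (\<lambda>A::real. A/2) at_top at_top"
  using filterlim_at_top_mult_tendsto_pos[OF tendsto_const[of "1/2"] _ filterlim_ident] by simp

lemma eventually_transit_bound_le:
  fixes p l c \<delta> :: real
  assumes p: "1 < p" "p - 1 < l" and "0 < c" "0 < \<delta>"
  shows "eventually (\<lambda>A. transit_bound p A (decay_rate l c A) \<le> \<delta>) at_top"
proof -
  have "(p-1-l)/p < 0" using p by (simp add: divide_neg_pos)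
  from tendsto_mult_right_zero[OF tendsto_neg_powr[OF this filterlim_half_at_top]]
  have "eventually (\<lambda>A. 3 * (c/2) powr (-1/p) * (A/2) powr ((p-1-l)/p) < \<delta>) at_top"
    using order_tendstoD(2) \<open>0 < \<delta>\<close> by blast
  with eventually_gt_at_top[of 0] show ?thesis
    by eventually_elim (simp add: transit_bound_decay_rate assms)
qed

lemma eventually_descent_time_le:
  fixes p l c \<beta> \<delta> :: real
  assumes p: "1 < p" "p - 1 < l" and c: "0 < c" and "0 < \<delta>"
  shows "eventually (\<lambda>A. \<beta> / descent_speed p l c A \<le> \<delta>) at_top"
proof -
  define K where "K = \<beta> * 2 powr (1/(p-1)) / (c/2) powr (1/p)"
  have "- ((l+1)/p) < 0" using p by simp
  from tendsto_mult_right_zero[OF tendsto_neg_powr[OF this filterlim_half_at_top]]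
  have "eventually (\<lambda>A. K * (A/2) powr (- ((l+1)/p)) < \<delta>) at_top"
    using order_tendstoD(2) \<open>0 < \<delta>\<close> by blast
  with eventually_gt_at_top[of 0] show ?thesis
  proof eventually_elim
    case (elim A)
    have "\<beta> / descent_speed p l c A = K * (A/2) powr (- ((l+1)/p))"
      using elim c p by (simp add: descent_speed_eq K_def powr_minus field_simps)
    then show ?case using elim by simp
  qed
qed

lemma eventually_superlinear_gt:
  fixes l K :: real
  assumes "0 < l"
  shows "eventually (\<lambda>A. K < (A/2) powr l / 2 * A) at_top"
  using eventually_ge_at_top[of "max 2 (2 * (\<bar>K\<bar> + 1))"]
proof eventually_elim
  case (elim A)
  then have A: "1 \<le> A/2" "\<bar>K\<bar> + 1 \<le> A/2" by auto
  have "A/2 = (A/2) powr 1" using A by simp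
  also have "\<dots> \<le> (A/2) powr (l + 1)" using A assms by (intro powr_mono) auto
  also have "\<dots> = (A/2) powr l / 2 * A" using A by (simp add: powr_add)
  finally show ?case using A by linarith
qed

lemma descent_speed_le:
  fixes p l c \<eta> A g :: real
  assumes p: "1 < p" and "0 < c" "c \<le> \<eta>" "0 < A"
    and "(decay_rate l \<eta> A * A / 2) powr ((p-1)/p) \<le> 2 * g"
  shows "descent_speed p l c A \<le> g powr (1/(p-1))"
proof -
  have "decay_rate l c A * A / 2 \<le> decay_rate l \<eta> A * A / 2"
    using assms by (simp add: decay_rate_def mult_right_mono divide_right_mono)
  moreover have "0 \<le> decay_rate l c A * A / 2" using assms by (simp add: decay_rate_def)
  ultimately have "(decay_rate l c A * A / 2) powr ((p-1)/p) \<le> (decay_rate l \<eta> A * A / 2) powr ((p-1)/p)"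
    using p by (intro powr_mono2) auto
  then have "(decay_rate l c A * A / 2) powr ((p-1)/p) \<le> 2 * g" using assms(5) by simp
  then show ?thesis
    unfolding descent_speed_def using p by (intro powr_mono2) auto
qed

lemma amplitude_le_of_flux_recovery:
  fixes p l \<eta> A g C :: real
  assumes p: "1 < p" and "0 < \<eta>" "0 < A" "0 < g"
    and X: "(decay_rate l \<eta> A * A / 2) powr ((p-1)/p) \<le> 2 * g"
    and recovery: "g * g powr (1/(p-1)) \<le> \<eta> * C"
  shows "(A/2) powr l / 2 * A \<le> 2 powr (2 + 1/(p-1)) * C"
proof -
  define e where "e = 1/(p-1)"
  define X where "X = decay_rate l \<eta> A * A / 2"
  have X0: "0 \<le> X" using assms by (simp add: X_def decay_rate_def)
  have "X = (X powr ((p-1)/p)) powr (1 + e)"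
    using X0 p by (simp add: powr_powr e_def field_simps)
  also have "\<dots> \<le> (2 * g) powr (1 + e)"
    using X p by (intro powr_mono2) (auto simp: X_def e_def)
  also have "\<dots> = 2 powr (1 + e) * (g * g powr e)"
    using \<open>0 < g\<close> by (simp add: powr_mult powr_add)
  also have "\<dots> \<le> 2 powr (1 + e) * (\<eta> * C)"
    using recovery by (simp add: e_def)
  also have "2 powr (1 + e) * (\<eta> * C) = \<eta> * (2 powr (1 + e) * C)" by simp
  also have "X = \<eta> * ((A/2) powr l / 2 * A / 2)" by (simp add: X_def decay_rate_def)
  finally have "(A/2) powr l / 2 * A / 2 \<le> 2 powr (1 + e) * C"
    using \<open>0 < \<eta>\<close> by (simp only: mult_le_cancel_left_pos)
  then have "(A/2) powr l / 2 * A \<le> 2 * 2 powr (1 + e) * C" by simp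
  also have "2 * 2 powr (1 + e) = 2 powr (2 + e)"
    using powr_add[of "2::real" 1 "1 + e"] by (simp add: add.assoc[symmetric])
  finally show ?thesis by (simp add: e_def)
qed

section \<open>The shooting problem\<close>

locale nonlinearity =
  fixes p \<beta> l m M1 Cf Cm :: real and f :: "real \<Rightarrow> real"
  assumes p_gt_1: "1 < p" and beta_pos: "0 < \<beta>" and l_gt: "p - 1 < l"
    and m_pos: "0 < m" and m_lt_1: "m < 1"
    and f_nonpos: "\<And>x. 0 < x \<Longrightarrow> x \<le> \<beta> \<Longrightarrow> f x \<le> 0"
    and f_nonneg: "\<And>x. \<beta> \<le> x \<Longrightarrow> 0 \<le> f x"
    and M1_pos: "0 < M1"
    and f_ge_powr: "\<And>x. M1 \<le> x \<Longrightarrow> x powr l / 2 \<le> f x"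
    and Cf_nonneg: "0 \<le> Cf"
    and f_le_powr: "\<And>x. \<beta> \<le> x \<Longrightarrow> f x \<le> 2 * x powr l + Cf"
    and Cm_nonneg: "0 \<le> Cm"
    and f_singular_bound: "\<And>x. 0 < x \<Longrightarrow> x \<le> \<beta> \<Longrightarrow> - f x \<le> Cm * x powr (-m) + Cm"
begin

lemma l_pos: "0 < l" using l_gt p_gt_1 by simp

end

locale weight =
  fixes T C1 e1 :: real and h :: "real \<Rightarrow> real"
  assumes T_pos: "0 < T" and h_0: "h 0 = 0"
    and h_pos: "\<And>t. 0 < t \<Longrightarrow> t \<le> T \<Longrightarrow> 0 < h t"
    and h_antimono: "\<And>s t. 0 < s \<Longrightarrow> s \<le> t \<Longrightarrow> t < T \<Longrightarrow> h t \<le> h s"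
    and C1_pos: "0 < C1" and e1_gt: "-1 < e1"
    and h_le_powr: "\<And>t. 0 < t \<Longrightarrow> t \<le> T \<Longrightarrow> h t \<le> C1 * t powr e1"
begin

definition h_mass :: real where "h_mass = C1 * T powr (e1+1) / (e1+1)"

lemma integral_h_majorant_le:
  assumes "0 \<le> s" "s \<le> y" "y \<le> T"
  shows "(\<lambda>r. C1 * r powr e1) integrable_on {s..y}"
    and "integral {s..y} (\<lambda>r. C1 * r powr e1) \<le> h_mass"
proof -
  have on_T: "((\<lambda>r. C1 * r powr e1) has_integral h_mass) {0..T}"
    using has_integral_mult_right[OF has_integral_powr_from_0[OF e1_gt, of T]] T_pos
    by (simp add: h_mass_def)
  show int: "(\<lambda>r. C1 * r powr e1) integrable_on {s..y}"
    using on_T assms by (auto intro: integrable_on_subinterval)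
  have "integral {s..y} (\<lambda>r. C1 * r powr e1) \<le> integral {0..T} (\<lambda>r. C1 * r powr e1)"
    using on_T int assms C1_pos by (intro integral_subset_le) auto
  then show "integral {s..y} (\<lambda>r. C1 * r powr e1) \<le> h_mass"
    using integral_unique[OF on_T] by simp
qed

end

locale shooting = nonlinearity + weight +
  fixes v :: "real \<Rightarrow> real \<Rightarrow> real"
  assumes solution: "\<And>a. 0 < a \<Longrightarrow> is_sol p h f a T (v a)"

locale trajectory = shooting +
  fixes a :: real and dv :: "real \<Rightarrow> real"
  assumes a_pos: "0 < a"
    and v_derivative: "\<And>t. t \<in> {0..T} \<Longrightarrow> (v a has_real_derivative dv t) (at t within {0..T})"
    and v_0: "v a 0 = 0"
    and forcing_integrable: "\<And>t. t \<in> {0..T} \<Longrightarrow> (\<lambda>s. h s * f (v a s)) integrable_on {0..t}"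
    and phi_dv: "\<And>t. t \<in> {0..T} \<Longrightarrow>
       \<bar>dv t\<bar> powr (p - 2) * dv t = a powr (p - 1) - integral {0..t} (\<lambda>s. h s * f (v a s))"
begin

definition flux :: "real \<Rightarrow> real" where
  "flux t = a powr (p - 1) - integral {0..t} (\<lambda>s. h s * f (v a s))"

lemma dv_eq: "0 \<le> t \<Longrightarrow> t \<le> T \<Longrightarrow> dv t = phi_inv p (flux t)"
  using phi_inv_phi[OF p_gt_1, of "dv t"] phi_dv[of t] by (simp add: flux_def)

lemma flux_0: "flux 0 = a powr (p - 1)"
  by (simp add: flux_def)

lemma forcing_integrable_on:
  "0 \<le> s \<Longrightarrow> s \<le> t \<Longrightarrow> t \<le> T \<Longrightarrow> (\<lambda>s. h s * f (v a s)) integrable_on {s..t}"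
  using forcing_integrable[of t] by (auto intro: integrable_on_subinterval)

lemma flux_diff:
  assumes "0 \<le> s" "s \<le> t" "t \<le> T"
  shows "flux s - flux t = integral {s..t} (\<lambda>s. h s * f (v a s))"
  using Henstock_Kurzweil_Integration.integral_combine[OF assms(1,2) forcing_integrable[of t]] assms
  by (simp add: flux_def)

lemma flux_cont_on: "0 \<le> x \<Longrightarrow> y \<le> T \<Longrightarrow> continuous_on {x..y} flux"
proof -
  have "continuous_on {0..T} flux"
    using indefinite_integral_continuous_1[OF forcing_integrable[of T]] T_pos
    unfolding flux_def by (intro continuous_intros) auto
  then show "0 \<le> x \<Longrightarrow> y \<le> T \<Longrightarrow> continuous_on {x..y} flux"
    by (rule continuous_on_subset) auto
qed

lemma v_cont_on: "0 \<le> x \<Longrightarrow> y \<le> T \<Longrightarrow> continuous_on {x..y} (v a)"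
  using DERIV_continuous_on[OF v_derivative] by (rule continuous_on_subset) auto

lemma mean_value:
  assumes "0 \<le> s" "s < t" "t \<le> T"
  obtains z where "s < z" "z < t" "v a t - v a s = (t - s) * dv z"
proof -
  have "(v a has_real_derivative dv r) (at r)" if "s < r" "r < t" for r
    using v_derivative[of r] that assms at_within_Icc_at[of 0 r T] by auto
  moreover obtain d z where "s < z" "z < t" "(v a has_real_derivative d) (at z)"
      "v a t - v a s = (t - s) * d"
    using MVT[OF assms(2) v_cont_on] assms calculation by (meson real_differentiable_def)
  ultimately show ?thesis using that DERIV_unique by metis
qed

lemma increment_ge:
  assumes "0 \<le> s" "s \<le> t" "t \<le> T" and "\<And>r. s \<le> r \<Longrightarrow> r \<le> t \<Longrightarrow> L \<le> dv r"
  shows "L * (t - s) \<le> v a t - v a s"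
proof (cases "s = t")
  case False
  then obtain z where "s < z" "z < t" "v a t - v a s = (t - s) * dv z"
    using mean_value assms by (metis order_le_less)
  then show ?thesis using assms(4)[of z] by (simp add: mult.commute mult_right_mono)
qed simp

lemma increment_le:
  assumes "0 \<le> s" "s \<le> t" "t \<le> T" and "\<And>r. s \<le> r \<Longrightarrow> r \<le> t \<Longrightarrow> dv r \<le> U"
  shows "v a t - v a s \<le> U * (t - s)"
proof (cases "s = t")
  case False
  then obtain z where "s < z" "z < t" "v a t - v a s = (t - s) * dv z"
    using mean_value assms by (metis order_le_less)
  then show ?thesis using assms(4)[of z] by (simp add: mult.commute mult_right_mono)
qed simp

lemma flux_antimono_above_beta:
  assumes "0 < s" "s \<le> t" "t \<le> T" and "\<And>r. s \<le> r \<Longrightarrow> r \<le> t \<Longrightarrow> \<beta> \<le> v a r"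
  shows "flux t \<le> flux s"
proof -
  have "0 \<le> integral {s..t} (\<lambda>s. h s * f (v a s))"
    using forcing_integrable_on[of s t] assms
    by (intro integral_nonneg) (auto intro!: mult_nonneg_nonneg less_imp_le[OF h_pos] f_nonneg)
  then show ?thesis using flux_diff[of s t] assms by simp
qed

lemma increment_bounds_rising:
  assumes st: "0 \<le> s" "s \<le> t" "t \<le> T"
    and flux: "\<And>r. s \<le> r \<Longrightarrow> r \<le> t \<Longrightarrow> flux t \<le> flux r \<and> flux r \<le> flux s" "0 \<le> flux t"
  shows "(t - s) * flux t powr (1/(p-1)) \<le> v a t - v a s
    \<and> v a t - v a s \<le> (t - s) * flux s powr (1/(p-1))"
proof
  have "flux t powr (1/(p-1)) * (t - s) \<le> v a t - v a s"
  proof (rule increment_ge[OF st])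
    fix r assume r: "s \<le> r" "r \<le> t"
    have "flux t powr (1/(p-1)) = phi_inv p (flux t)" using flux by (simp add: phi_inv_nonneg)
    also have "\<dots> \<le> phi_inv p (flux r)" using flux(1)[OF r] by (intro phi_inv_mono[OF p_gt_1]) auto
    finally show "flux t powr (1/(p-1)) \<le> dv r" using dv_eq[of r] r st by simp
  qed
  then show "(t - s) * flux t powr (1/(p-1)) \<le> v a t - v a s" by (simp add: mult.commute)
  have "v a t - v a s \<le> flux s powr (1/(p-1)) * (t - s)"
  proof (rule increment_le[OF st])
    fix r assume r: "s \<le> r" "r \<le> t"
    have "phi_inv p (flux r) \<le> phi_inv p (flux s)" using flux(1)[OF r] by (intro phi_inv_mono[OF p_gt_1]) auto
    also have "\<dots> = flux s powr (1/(p-1))" using flux(1)[of t] flux(2) st by (simp add: phi_inv_nonneg)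
    finally show "dv r \<le> flux s powr (1/(p-1))" using dv_eq[of r] r st by simp
  qed
  then show "v a t - v a s \<le> (t - s) * flux s powr (1/(p-1))" by (simp add: mult.commute)
qed

lemma increment_bounds_falling:
  assumes st: "0 \<le> s" "s \<le> t" "t \<le> T"
    and flux: "\<And>r. s \<le> r \<Longrightarrow> r \<le> t \<Longrightarrow> flux t \<le> flux r \<and> flux r \<le> flux s" "flux s \<le> 0"
  shows "- ((t - s) * (- flux t) powr (1/(p-1))) \<le> v a t - v a s
    \<and> v a t - v a s \<le> - ((t - s) * (- flux s) powr (1/(p-1)))"
proof
  have "- ((- flux t) powr (1/(p-1))) * (t - s) \<le> v a t - v a s"
  proof (rule increment_ge[OF st])
    fix r assume r: "s \<le> r" "r \<le> t"
    have "- ((- flux t) powr (1/(p-1))) = phi_inv p (flux t)"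
      using flux(1)[of t] flux(2) st by (simp add: phi_inv_nonpos)
    also have "\<dots> \<le> phi_inv p (flux r)" using flux(1)[OF r] by (intro phi_inv_mono[OF p_gt_1]) auto
    finally show "- ((- flux t) powr (1/(p-1))) \<le> dv r" using dv_eq[of r] r st by simp
  qed
  then show "- ((t - s) * (- flux t) powr (1/(p-1))) \<le> v a t - v a s" by (simp add: mult.commute)
  have "v a t - v a s \<le> - ((- flux s) powr (1/(p-1))) * (t - s)"
  proof (rule increment_le[OF st])
    fix r assume r: "s \<le> r" "r \<le> t"
    have "phi_inv p (flux r) \<le> phi_inv p (flux s)" using flux(1)[OF r] by (intro phi_inv_mono[OF p_gt_1]) auto
    also have "\<dots> = - ((- flux s) powr (1/(p-1)))" using flux by (simp add: phi_inv_nonpos)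
    finally show "dv r \<le> - ((- flux s) powr (1/(p-1)))" using dv_eq[of r] r st by simp
  qed
  then show "v a t - v a s \<le> - ((t - s) * (- flux s) powr (1/(p-1)))" by (simp add: mult.commute)
qed

lemma positive_near_0: "\<exists>\<delta>>0. \<forall>t. 0 < t \<and> t \<le> \<delta> \<longrightarrow> 0 < v a t"
proof -
  define g where "g = a powr (p - 1) / 2"
  have g: "0 < g" using a_pos by (simp add: g_def)
  have "0 \<in> {0..T}" using T_pos by simp
  with flux_cont_on[of 0 T] obtain d where d: "d > 0" "\<forall>x\<in>{0..T}. dist x 0 < d \<longrightarrow> dist (flux x) (flux 0) < g"
    unfolding continuous_on_iff using g by blast
  define \<delta> where "\<delta> = min (d/2) T"
  have \<delta>: "0 < \<delta>" "\<delta> \<le> T" "\<delta> < d" using d T_pos by (auto simp: \<delta>_def)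
  have "0 < v a t" if "0 < t" "t \<le> \<delta>" for t
  proof -
    have "phi_inv p g * (t - 0) \<le> v a t - v a 0"
    proof (rule increment_ge)
      fix r assume r: "0 \<le> r" "r \<le> t"
      have "\<bar>flux r - flux 0\<bar> < g" using d(2)[rule_format, of r] r that \<delta> by (auto simp: dist_real_def)
      then have "g \<le> flux r" using flux_0 unfolding g_def by linarith
      then show "phi_inv p g \<le> dv r"
        using r that \<delta> by (simp add: dv_eq phi_inv_mono[OF p_gt_1])
    qed (use that \<delta> in auto)
    then have "phi_inv p g * t \<le> v a t" using v_0 by simp
    moreover have "0 < phi_inv p g * t" using g that by (simp add: phi_inv_nonneg)
    ultimately show ?thesis by linarith
  qed
  then show ?thesis using \<delta> by blast
qed

lemma descent_linear:
  assumes "0 \<le> s" "s \<le> t" "t \<le> T" "0 \<le> g" and below: "\<And>r. s \<le> r \<Longrightarrow> r \<le> t \<Longrightarrow> flux r \<le> - g"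
  shows "v a t - v a s \<le> - (g powr (1/(p-1)) * (t - s))"
proof -
  have "v a t - v a s \<le> (- (g powr (1/(p-1)))) * (t - s)"
  proof (rule increment_le[OF assms(1-3)])
    fix r assume "s \<le> r" "r \<le> t"
    then have "phi_inv p (flux r) \<le> phi_inv p (- g)" by (intro phi_inv_mono[OF p_gt_1] below)
    then show "dv r \<le> - (g powr (1/(p-1)))"
      using dv_eq[of r] \<open>s \<le> r\<close> \<open>r \<le> t\<close> assms by (simp add: phi_inv_nonpos)
  qed
  then show ?thesis by simp
qed

end

context shooting
begin

lemma trajectory_exists:
  assumes "0 < a"
  obtains dv where "trajectory p \<beta> l m M1 Cf Cm f T C1 e1 h v a dv"
proof -
  obtain dv where "\<forall>t\<in>{0..T}. (v a has_real_derivative dv t) (at t within {0..T})" "v a 0 = 0"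
      "\<forall>t\<in>{0..T}. (\<lambda>s. h s * f (v a s)) integrable_on {0..t} \<and>
         \<bar>dv t\<bar> powr (p - 2) * dv t = a powr (p - 1) - integral {0..t} (\<lambda>s. h s * f (v a s))"
    using solution[OF assms] unfolding is_sol_def by blast
  with assms show ?thesis
    by (intro that trajectory.intro shooting_axioms trajectory_axioms.intro) auto
qed

text \<open>Conditions on the maximum A of v: rising from \<beta> to A and falling back take time at most
  \<epsilon>/8 each, descending from \<beta> to 0 at the guaranteed speed takes at most 3\<epsilon>/8, and the
  singular part of f cannot restore half of the flux (last clause).\<close>
definition large_amplitude :: "real \<Rightarrow> real \<Rightarrow> bool" where
  "large_amplitude \<epsilon> A \<longleftrightarrow> 2*M1 \<le> A \<and> 2*\<beta> \<le> A
     \<and> transit_bound p A (decay_rate l (h \<epsilon>) A) \<le> \<epsilon>/8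
     \<and> \<beta> / descent_speed p l (h \<epsilon>) A \<le> 3*\<epsilon>/8
     \<and> 2 powr (2 + 1/(p-1)) * (Cm * (\<beta> powr (1-m)/(1-m) + \<beta>)) < (A/2) powr l / 2 * A"

lemma eventually_large_amplitude:
  assumes "0 < \<epsilon>" "\<epsilon> \<le> T"
  shows "eventually (large_amplitude \<epsilon>) at_top"
proof -
  have c: "0 < h \<epsilon>" using h_pos assms by simp
  have \<delta>: "0 < \<epsilon>/8" "0 < 3*\<epsilon>/8" using assms by auto
  from eventually_ge_at_top[of "max (2*M1) (2*\<beta>)"]
    eventually_transit_bound_le[OF p_gt_1 l_gt c \<delta>(1)]
    eventually_descent_time_le[OF p_gt_1 l_gt c \<delta>(2)]
    eventually_superlinear_gt[OF l_pos]
  show ?thesis unfolding large_amplitude_def by eventually_elim auto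
qed

text \<open>Conditions on the initial slope: v reaches \<beta> before \<epsilon>/4, a flux above half its
  initial value carries v beyond Astar within time \<epsilon>/4, and the flux cannot be halved while
  v stays in [\<beta>, Astar].\<close>
definition large_slope :: "real \<Rightarrow> real \<Rightarrow> real \<Rightarrow> bool" where
  "large_slope \<epsilon> Astar a \<longleftrightarrow> 4*\<beta>/\<epsilon> \<le> a
     \<and> Astar \<le> (\<epsilon>/4) * phi_inv p (a powr (p-1) / 2)
     \<and> (2 * Astar powr l + Cf) * h_mass < a powr (p-1) / 2"

lemma eventually_large_slope:
  assumes "0 < \<epsilon>"
  shows "eventually (large_slope \<epsilon> Astar) at_top"
proof -
  define X where "X = (2 * Astar powr l + Cf) * h_mass"
  define c where "c = 2 powr (1/(p-1))"
  have c: "0 < c" by (simp add: c_def)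
  have phi: "phi_inv p (a powr (p-1) / 2) = a / c" if "0 < a" for a
    using that p_gt_1 by (simp add: phi_inv_nonneg c_def powr_divide powr_powr)
  have flux_large: "X < a powr (p-1) / 2" if "(2 * \<bar>X\<bar> + 1) powr (1/(p-1)) \<le> a" for a
  proof -
    have "2 * \<bar>X\<bar> + 1 = ((2 * \<bar>X\<bar> + 1) powr (1/(p-1))) powr (p-1)"
      using p_gt_1 by (simp add: powr_powr)
    also have "\<dots> \<le> a powr (p-1)" using that p_gt_1 by (intro powr_mono2) auto
    finally show ?thesis by linarith
  qed
  show ?thesis
    using eventually_ge_at_top[of "max (4*\<beta>/\<epsilon>) (4 * \<bar>Astar\<bar> * c / \<epsilon>)"]
      eventually_ge_at_top[of "(2 * \<bar>X\<bar> + 1) powr (1/(p-1))"] eventually_gt_at_top[of 0]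
  proof eventually_elim
    case (elim a)
    then have "\<bar>Astar\<bar> \<le> (\<epsilon>/4) * (a / c)" using assms c by (simp add: field_simps)
    then show ?case using elim phi flux_large by (simp add: large_slope_def X_def)
  qed
qed

end

locale positive_trajectory = trajectory +
  fixes \<epsilon> Astar :: real
  assumes eps_pos: "0 < \<epsilon>" and eps_lt_T: "\<epsilon> < T"
    and v_pos: "\<And>t. 0 < t \<Longrightarrow> t \<le> \<epsilon> \<Longrightarrow> 0 < v a t"
    and amplitude: "\<And>A. Astar \<le> A \<Longrightarrow> large_amplitude \<epsilon> A"
    and slope: "large_slope \<epsilon> Astar a"
begin

lemma h_eps_le: "0 < t \<Longrightarrow> t \<le> \<epsilon> \<Longrightarrow> h \<epsilon> \<le> h t"
  using h_antimono eps_lt_T by simp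

lemma h_eps_pos: "0 < h \<epsilon>"
  using h_pos eps_pos eps_lt_T by simp

lemma flux_ge_initial:
  assumes "0 \<le> t" "t \<le> \<epsilon>" and below: "\<And>r. 0 \<le> r \<Longrightarrow> r \<le> t \<Longrightarrow> v a r \<le> \<beta>"
  shows "a powr (p-1) \<le> flux t"
proof -
  have "integral {0..t} (\<lambda>s. h s * f (v a s)) \<le> integral {0..t} (\<lambda>_. 0)"
  proof (rule integral_le)
    show "(\<lambda>s. h s * f (v a s)) integrable_on {0..t}"
      using forcing_integrable_on[of 0 t] assms eps_lt_T by simp
    fix r assume r: "r \<in> {0..t}"
    show "h r * f (v a r) \<le> 0"
    proof (cases "r = 0")
      case False
      then have "0 < h r" "f (v a r) \<le> 0"
        using r assms eps_lt_T h_pos v_pos below f_nonpos by auto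
      then show ?thesis by (simp add: mult_nonneg_nonpos)
    qed (simp add: h_0)
  qed (rule integrable_0)
  then show ?thesis by (simp add: flux_def)
qed

lemma reaches_beta_early:
  obtains s1 where "0 < s1" "s1 \<le> \<epsilon>/4" "v a s1 = \<beta>" "a powr (p-1) \<le> flux s1"
proof -
  have "\<exists>t\<in>{0..\<epsilon>/4}. \<beta> \<le> v a t"
  proof (rule ccontr)
    assume "\<not> ?thesis"
    then have below: "\<And>t. 0 \<le> t \<Longrightarrow> t \<le> \<epsilon>/4 \<Longrightarrow> v a t < \<beta>" by (auto simp: not_le)
    have "a * (\<epsilon>/4 - 0) \<le> v a (\<epsilon>/4) - v a 0"
    proof (rule increment_ge)
      fix r assume r: "0 \<le> r" "r \<le> \<epsilon>/4"
      have "a powr (p-1) \<le> flux r"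
        using r below eps_pos by (intro flux_ge_initial) (auto intro: less_imp_le)
      then have "phi_inv p (a powr (p-1)) \<le> phi_inv p (flux r)" by (rule phi_inv_mono[OF p_gt_1])
      then show "a \<le> dv r" using dv_eq[of r] r eps_lt_T phi_inv_powr[OF p_gt_1 a_pos] by simp
    qed (use eps_pos eps_lt_T in auto)
    then have "a * \<epsilon> < 4 * \<beta>" using below[of "\<epsilon>/4"] eps_pos v_0 by simp
    moreover have "4 * \<beta> \<le> a * \<epsilon>" using slope eps_pos by (simp add: large_slope_def field_simps)
    ultimately show False by simp
  qed
  then obtain t where t: "0 \<le> t" "t \<le> \<epsilon>/4" "\<beta> \<le> v a t" by auto
  then obtain s1 where s1: "0 < s1" "s1 \<le> t" "v a s1 = \<beta>" and before: "\<And>r. 0 \<le> r \<and> r < s1 \<longrightarrow> v a r < \<beta>"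
    using first_crossing_above[of 0 t "v a" \<beta>] v_cont_on[of 0 t] v_0 beta_pos eps_pos eps_lt_T by auto
  have "a powr (p-1) \<le> flux s1"
    using s1 t before eps_pos by (intro flux_ge_initial) (auto simp: le_less)
  then show ?thesis using that s1 t by simp
qed

lemma rising_phase:
  assumes s1: "0 < s1" "s1 \<le> y" "y \<le> \<epsilon>" "v a s1 = \<beta>"
    and flux_nonneg: "\<And>t. s1 \<le> t \<Longrightarrow> t \<le> y \<Longrightarrow> 0 \<le> flux t"
  shows "\<And>s t. s1 \<le> s \<Longrightarrow> s \<le> t \<Longrightarrow> t \<le> y \<Longrightarrow> v a s \<le> v a t"
    and "\<And>t. s1 \<le> t \<Longrightarrow> t \<le> y \<Longrightarrow> \<beta> \<le> v a t"
    and "\<And>s t. s1 \<le> s \<Longrightarrow> s \<le> t \<Longrightarrow> t \<le> y \<Longrightarrow> flux t \<le> flux s"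
proof -
  show mono: "v a s \<le> v a t" if "s1 \<le> s" "s \<le> t" "t \<le> y" for s t
  proof -
    have "0 * (t - s) \<le> v a t - v a s"
    proof (rule increment_ge)
      fix r assume "s \<le> r" "r \<le> t"
      then show "0 \<le> dv r" using flux_nonneg[of r] dv_eq[of r] that s1 eps_lt_T by (simp add: phi_inv_nonneg)
    qed (use that s1 eps_lt_T in auto)
    then show ?thesis by simp
  qed
  show above: "\<beta> \<le> v a t" if "s1 \<le> t" "t \<le> y" for t using mono[of s1 t] that s1 by simp
  show "flux t \<le> flux s" if "s1 \<le> s" "s \<le> t" "t \<le> y" for s t
    by (rule flux_antimono_above_beta) (use that s1 eps_lt_T above in auto)
qed

lemma flux_decay:
  assumes st: "0 < s" "s \<le> t" "t \<le> \<epsilon>" and "0 \<le> \<eta>" "2*M1 \<le> A"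
    and bounds: "\<And>r. s \<le> r \<Longrightarrow> r \<le> t \<Longrightarrow> \<eta> \<le> h r \<and> A/2 \<le> v a r"
  shows "decay_rate l \<eta> A * (t - s) \<le> flux s - flux t"
proof -
  have "integral {s..t} (\<lambda>_. decay_rate l \<eta> A) \<le> integral {s..t} (\<lambda>s. h s * f (v a s))"
  proof (rule integral_le)
    show "(\<lambda>_. decay_rate l \<eta> A) integrable_on {s..t}"
      by (rule Henstock_Kurzweil_Integration.integrable_const_ivl)
    show "(\<lambda>s. h s * f (v a s)) integrable_on {s..t}"
      using forcing_integrable_on[of s t] st eps_lt_T by simp
    fix r assume "r \<in> {s..t}"
    then have r: "\<eta> \<le> h r" "A/2 \<le> v a r" using bounds by auto
    have "(A/2) powr l / 2 \<le> v a r powr l / 2"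
      using r M1_pos assms l_pos by (simp add: powr_mono2)
    also have "\<dots> \<le> f (v a r)" using f_ge_powr[of "v a r"] r assms by simp
    finally show "decay_rate l \<eta> A \<le> h r * f (v a r)"
      unfolding decay_rate_def using r assms by (simp add: mult_mono mult.assoc)
  qed
  then show ?thesis using flux_diff[of s t] st eps_lt_T by (simp add: mult.commute)
qed

lemma flux_loss_le:
  assumes sy: "0 < s" "s \<le> y" "y \<le> \<epsilon>"
    and bounds: "\<And>r. s \<le> r \<Longrightarrow> r \<le> y \<Longrightarrow> \<beta> \<le> v a r \<and> v a r \<le> B"
  shows "flux s - flux y \<le> (2 * B powr l + Cf) * h_mass"
proof -
  define K where "K = 2 * B powr l + Cf"
  note majorant = integral_h_majorant_le[of s y]
  have "integral {s..y} (\<lambda>s. h s * f (v a s)) \<le> integral {s..y} (\<lambda>r. K * (C1 * r powr e1))"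
  proof (rule integral_le)
    show "(\<lambda>s. h s * f (v a s)) integrable_on {s..y}"
      using forcing_integrable_on[of s y] sy eps_lt_T by simp
    show "(\<lambda>r. K * (C1 * r powr e1)) integrable_on {s..y}"
      using integrable_on_cmult_left[OF majorant(1), of K] sy eps_lt_T by simp
    fix r assume "r \<in> {s..y}"
    then have r: "\<beta> \<le> v a r" "v a r \<le> B" "0 < h r" "h r \<le> C1 * r powr e1"
      using bounds h_pos h_le_powr sy eps_lt_T by auto
    have "f (v a r) \<le> K"
      using f_le_powr[of "v a r"] r beta_pos l_pos powr_mono2[of l "v a r" B] by (simp add: K_def)
    then have "h r * f (v a r) \<le> (C1 * r powr e1) * K"
      using r f_nonneg[of "v a r"] by (intro mult_mono) auto
    then show "h r * f (v a r) \<le> K * (C1 * r powr e1)" by (simp add: mult.commute)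
  qed
  also have "\<dots> = K * integral {s..y} (\<lambda>r. C1 * r powr e1)" by simp
  also have "\<dots> \<le> K * h_mass"
    using majorant(2) sy eps_lt_T Cf_nonneg by (intro mult_left_mono) (auto simp: K_def)
  finally show ?thesis using flux_diff[of s y] sy eps_lt_T by (simp add: K_def)
qed

lemma amplitude_large:
  assumes s1: "0 < s1" "v a s1 = \<beta>" "a powr (p-1) \<le> flux s1" "s1 \<le> y" "y \<le> \<epsilon>"
    and flux_nonneg: "\<And>t. s1 \<le> t \<Longrightarrow> t \<le> y \<Longrightarrow> 0 \<le> flux t"
    and alternative: "flux y < a powr (p-1)/2 \<or> \<epsilon>/4 \<le> y - s1"
  shows "Astar \<le> v a y"
proof (rule ccontr)
  assume "\<not> ?thesis"
  have rising: "v a s \<le> v a t" "\<beta> \<le> v a s" "flux t \<le> flux s" if "s1 \<le> s" "s \<le> t" "t \<le> y" for s t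
    using rising_phase[OF s1(1,4,5,2)] flux_nonneg that by (meson order_trans)+
  show False
  proof (cases "flux y < a powr (p-1)/2")
    case True
    have "\<beta> \<le> v a r \<and> v a r \<le> Astar" if "s1 \<le> r" "r \<le> y" for r
      using rising(1,2)[OF that order_refl] \<open>\<not> Astar \<le> v a y\<close> by simp
    then have "flux s1 - flux y \<le> (2 * Astar powr l + Cf) * h_mass"
      by (rule flux_loss_le[OF s1(1,4,5)])
    then show False using True s1(3) slope by (simp add: large_slope_def)
  next
    case False
    then have far: "\<epsilon>/4 \<le> y - s1" using alternative by simp
    have "phi_inv p (a powr (p-1)/2) * (y - s1) \<le> v a y - v a s1"
    proof (rule increment_ge)
      fix r assume r: "s1 \<le> r" "r \<le> y"
      have "a powr (p-1)/2 \<le> flux r" using False rising(3)[OF r order_refl] by simp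
      then show "phi_inv p (a powr (p-1)/2) \<le> dv r"
        using phi_inv_mono[OF p_gt_1] dv_eq[of r] r s1 eps_lt_T by simp
    qed (use s1 eps_lt_T in auto)
    moreover have "phi_inv p (a powr (p-1)/2) * (\<epsilon>/4) \<le> phi_inv p (a powr (p-1)/2) * (y - s1)"
      using far by (intro mult_left_mono) (simp_all add: phi_inv_nonneg)
    ultimately have "phi_inv p (a powr (p-1)/2) * (\<epsilon>/4) \<le> v a y - \<beta>" using s1 by simp
    then show False using slope \<open>\<not> Astar \<le> v a y\<close> beta_pos by (simp add: large_slope_def mult.commute)
  qed
qed

lemma flux_vanishes:
  assumes s1: "0 < s1" "s1 \<le> \<epsilon>/4" "v a s1 = \<beta>" "a powr (p-1) \<le> flux s1"
  obtains u where "s1 < u" "u \<le> \<epsilon>/2" "flux u = 0" "\<And>t. s1 \<le> t \<Longrightarrow> t \<le> u \<Longrightarrow> 0 \<le> flux t"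
proof -
  have y: "s1 \<le> \<epsilon>/2" "\<epsilon>/2 \<le> \<epsilon>" using s1 eps_pos by auto
  have "\<exists>t\<in>{s1..\<epsilon>/2}. flux t \<le> 0"
  proof (rule ccontr)
    assume "\<not> ?thesis"
    then have nonneg: "\<And>t. s1 \<le> t \<Longrightarrow> t \<le> \<epsilon>/2 \<Longrightarrow> 0 \<le> flux t"
      by (meson atLeastAtMost_iff linorder_linear)
    have rising: "v a s \<le> v a t" "\<beta> \<le> v a s" "flux t \<le> flux s"
      if "s1 \<le> s" "s \<le> t" "t \<le> \<epsilon>/2" for s t
      using rising_phase[OF s1(1) y s1(3)] nonneg that by (meson order_trans)+
    define A where "A = v a (\<epsilon>/2)"
    have "\<epsilon>/4 \<le> \<epsilon>/2 - s1" using s1(2) by simp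
    then have "Astar \<le> A" unfolding A_def using amplitude_large[OF s1(1,3,4) y nonneg] by blast
    then have amp: "large_amplitude \<epsilon> A" by (rule amplitude)
    then have A: "0 < A" "2*M1 \<le> A" using beta_pos by (auto simp: large_amplitude_def)
    interpret rising_arc p s1 "\<epsilon>/2" "decay_rate l (h \<epsilon>) A" A flux "v a"
    proof
      show "0 < decay_rate l (h \<epsilon>) A" using h_eps_pos A by (simp add: decay_rate_def)
      show "(t - s) * flux t powr (1/(p-1)) \<le> v a t - v a s \<and> v a t - v a s \<le> (t - s) * flux s powr (1/(p-1))"
        if "s1 \<le> s" "s \<le> t" "t \<le> \<epsilon>/2" for s t
        by (rule increment_bounds_rising) (use that s1 eps_lt_T rising nonneg in auto)
      show "decay_rate l (h \<epsilon>) A * (t - s) \<le> flux s - flux t"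
        if st: "s1 \<le> s" "s \<le> t" "t \<le> \<epsilon>/2" "A/2 \<le> v a s" for s t
      proof (rule flux_decay)
        fix r assume "s \<le> r" "r \<le> t"
        then show "h \<epsilon> \<le> h r \<and> A/2 \<le> v a r" using h_eps_le rising(1)[of s r] st s1 by auto
      qed (use st s1 A h_eps_pos in auto)
      show "continuous_on {s1..\<epsilon>/2} (v a)" using v_cont_on s1 eps_lt_T by simp
    qed (use p_gt_1 y s1 beta_pos A rising nonneg in \<open>auto simp: A_def\<close>)
    have "\<epsilon>/2 - s1 \<le> \<epsilon>/8" using transit_time_le amp by (simp add: large_amplitude_def)
    then show False using s1 by simp
  qed
  then obtain t where t: "s1 \<le> t" "t \<le> \<epsilon>/2" "flux t \<le> 0" by auto
  moreover have "0 < flux s1" using s1(4) a_pos by (simp add: less_le_trans[OF _ s1(4)])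
  ultimately obtain u where u: "s1 < u" "u \<le> t" "flux u = 0" and before: "\<forall>r. s1 \<le> r \<and> r < u \<longrightarrow> 0 < flux r"
    using first_crossing_below[of s1 t flux 0] flux_cont_on[of s1 t] s1 eps_lt_T by auto
  show ?thesis
  proof (rule that)
    show "0 \<le> flux r" if "s1 \<le> r" "r \<le> u" for r using before u that by (cases "r = u") auto
  qed (use u t in auto)
qed

lemma falling_phase:
  assumes u: "0 < u" "flux u = 0" "Astar \<le> v a u"
    and y: "u \<le> y" "y \<le> \<epsilon>" and above: "\<And>t. u \<le> t \<Longrightarrow> t \<le> y \<Longrightarrow> \<beta> \<le> v a t"
    and \<eta>: "0 < \<eta>" "\<And>r. u \<le> r \<Longrightarrow> r \<le> y \<Longrightarrow> \<eta> \<le> h r"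
  shows "(\<forall>t. u \<le> t \<and> t \<le> y \<and> v a t \<le> v a u / 2 \<longrightarrow>
            (decay_rate l \<eta> (v a u) * v a u / 2) powr ((p-1)/p) \<le> - flux t)
    \<and> y - u \<le> transit_bound p (v a u) (decay_rate l \<eta> (v a u))"
proof -
  have A: "2*M1 \<le> v a u" "0 < v a u"
    using amplitude[OF u(3)] beta_pos by (auto simp: large_amplitude_def)
  have anti: "flux t \<le> flux s" if "u \<le> s" "s \<le> t" "t \<le> y" for s t
    by (rule flux_antimono_above_beta) (use that u y eps_lt_T above in auto)
  have nonpos: "flux t \<le> 0" if "u \<le> t" "t \<le> y" for t using anti[of u t] that u by simp
  have incr: "- ((t - s) * (- flux t) powr (1/(p-1))) \<le> v a t - v a s
      \<and> v a t - v a s \<le> - ((t - s) * (- flux s) powr (1/(p-1)))"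
    if "u \<le> s" "s \<le> t" "t \<le> y" for s t
    by (rule increment_bounds_falling) (use that u y eps_lt_T anti nonpos in auto)
  have decreasing: "v a t \<le> v a s" if "u \<le> s" "s \<le> t" "t \<le> y" for s t
  proof -
    have "0 \<le> (t - s) * (- flux s) powr (1/(p-1))" using that by simp
    then show ?thesis using incr[OF that] by linarith
  qed
  show ?thesis
  proof (rule falling_arc)
    show "decay_rate l \<eta> (v a u) * (t - s) \<le> flux s - flux t"
      if st: "u \<le> s" "s \<le> t" "t \<le> y" "v a u / 2 \<le> v a t" for s t
    proof (rule flux_decay)
      fix r assume "s \<le> r" "r \<le> t"
      then show "\<eta> \<le> h r \<and> v a u / 2 \<le> v a r" using \<eta>(2) decreasing[of r t] st by auto
    qed (use st u y \<eta> A in auto)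
    show "continuous_on {u..y} (v a)" using v_cont_on u y eps_lt_T by simp
    show "0 \<le> v a y" using above[of y] y beta_pos by simp
  qed (use p_gt_1 y \<eta> A anti nonpos incr above beta_pos in \<open>auto simp: decay_rate_def\<close>)
qed

lemma returns_to_beta:
  assumes u: "0 < u" "u \<le> \<epsilon>/2" "flux u = 0" "Astar \<le> v a u"
  obtains tb where "u < tb" "tb \<le> 5*\<epsilon>/8" "v a tb = \<beta>"
    "(decay_rate l (h tb) (v a u) * v a u / 2) powr ((p-1)/p) \<le> - flux tb"
proof -
  have amp: "large_amplitude \<epsilon> (v a u)" using amplitude u(4) by simp
  have y: "u \<le> \<epsilon>" using u eps_pos by simp
  have "\<exists>t\<in>{u..\<epsilon>}. v a t \<le> \<beta>"
  proof (rule ccontr)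
    assume "\<not> ?thesis"
    then have "\<And>t. u \<le> t \<Longrightarrow> t \<le> \<epsilon> \<Longrightarrow> \<beta> \<le> v a t"
      by (meson atLeastAtMost_iff linorder_linear)
    from falling_phase[OF u(1,3,4) y order_refl this h_eps_pos] h_eps_le u(1)
    have "\<epsilon> - u \<le> transit_bound p (v a u) (decay_rate l (h \<epsilon>) (v a u))" by auto
    then show False using amp u by (simp add: large_amplitude_def)
  qed
  then obtain t where t: "u \<le> t" "t \<le> \<epsilon>" "v a t \<le> \<beta>" by auto
  moreover have "\<beta> < v a u" using amp beta_pos by (simp add: large_amplitude_def)
  ultimately obtain tb where tb: "u < tb" "tb \<le> t" "v a tb = \<beta>"
    and before: "\<forall>r. u \<le> r \<and> r < tb \<longrightarrow> \<beta> < v a r"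
    using first_crossing_below[of u t "v a" \<beta>] v_cont_on[of u t] u eps_lt_T by auto
  have above: "\<beta> \<le> v a r" if "u \<le> r" "r \<le> tb" for r
    using before tb that by (cases "r = tb") auto
  have tb_le: "tb \<le> \<epsilon>" using tb t by simp
  have "h \<epsilon> \<le> h r" if "u \<le> r" "r \<le> tb" for r using h_eps_le that u(1) tb_le by simp
  from falling_phase[OF u(1,3,4) less_imp_le[OF tb(1)] tb_le above h_eps_pos this]
  have "tb - u \<le> \<epsilon>/8" using amp by (auto simp: large_amplitude_def)
  moreover have "(decay_rate l (h tb) (v a u) * v a u / 2) powr ((p-1)/p) \<le> - flux tb"
  proof -
    have "0 < h tb" using h_pos u tb tb_le eps_lt_T by simp
    moreover have "h tb \<le> h r" if "u \<le> r" "r \<le> tb" for r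
      using h_antimono[of r tb] that u tb_le eps_lt_T by simp
    moreover have "v a tb \<le> v a u / 2" using amp tb by (simp add: large_amplitude_def)
    ultimately show ?thesis
      using falling_phase[OF u(1,3,4) less_imp_le[OF tb(1)] tb_le above] tb by auto
  qed
  ultimately show ?thesis using that tb u by simp
qed

lemma flux_recovers:
  assumes tb: "0 < tb" "tb \<le> \<epsilon>" "v a tb = \<beta>" and g: "0 < g" "flux tb < - g"
    and slow: "\<beta> \<le> g powr (1/(p-1)) * (\<epsilon> - tb)"
  obtains t2 where "tb < t2" "t2 \<le> \<epsilon>" "flux t2 = - g" "\<And>r. tb \<le> r \<Longrightarrow> r \<le> t2 \<Longrightarrow> flux r \<le> - g"
proof -
  have "\<exists>t\<in>{tb..\<epsilon>}. - g \<le> flux t"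
  proof (rule ccontr)
    assume "\<not> ?thesis"
    then have "\<And>r. tb \<le> r \<Longrightarrow> r \<le> \<epsilon> \<Longrightarrow> flux r \<le> - g"
      by (meson atLeastAtMost_iff linorder_linear)
    then have "v a \<epsilon> - v a tb \<le> - (g powr (1/(p-1)) * (\<epsilon> - tb))"
      using tb eps_lt_T g by (intro descent_linear) auto
    then show False using v_pos[of \<epsilon>] eps_pos slow tb by simp
  qed
  then obtain t where t: "tb \<le> t" "t \<le> \<epsilon>" "- g \<le> flux t" by auto
  then obtain t2 where t2: "tb < t2" "t2 \<le> t" "flux t2 = - g"
    and before: "\<forall>r. tb \<le> r \<and> r < t2 \<longrightarrow> flux r < - g"
    using first_crossing_above[of tb t flux "- g"] flux_cont_on[of tb t] tb g eps_lt_T by auto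
  show ?thesis
  proof (rule that)
    show "flux r \<le> - g" if "tb \<le> r" "r \<le> t2" for r using before t2 that by (cases "r = t2") auto
  qed (use t2 t in auto)
qed

lemma descent_profile:
  assumes tb: "0 < tb" "tb \<le> t2" "t2 \<le> \<epsilon>" "v a tb = \<beta>" and "0 \<le> g"
    and below: "\<And>r. tb \<le> r \<Longrightarrow> r \<le> t2 \<Longrightarrow> flux r \<le> - g"
    and r: "tb \<le> r" "r \<le> t2"
  shows "v a t2 + g powr (1/(p-1)) * (t2 - r) \<le> v a r" and "v a r \<le> \<beta>"
proof -
  have descent: "v a t - v a s \<le> - (g powr (1/(p-1)) * (t - s))"
    if "tb \<le> s" "s \<le> t" "t \<le> t2" for s t
    using that tb eps_lt_T \<open>0 \<le> g\<close> below by (intro descent_linear) auto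
  show "v a t2 + g powr (1/(p-1)) * (t2 - r) \<le> v a r" using descent[OF r order_refl] by simp
  have "0 \<le> g powr (1/(p-1)) * (r - tb)" using r by simp
  then show "v a r \<le> \<beta>" using descent[OF order_refl r] tb by linarith
qed

lemma singular_forcing_le:
  assumes "0 < tb" "tb \<le> r" "r \<le> \<epsilon>" "0 < b" "b \<le> v a r" "v a r \<le> \<beta>"
  shows "- (h r * f (v a r)) \<le> h tb * Cm * b powr (-m) + h tb * Cm"
proof -
  have "- f (v a r) \<le> Cm * v a r powr (-m) + Cm" using f_singular_bound assms by simp
  also have "\<dots> \<le> Cm * b powr (-m) + Cm"
    using powr_mono2'[of "-m" b "v a r"] m_pos assms Cm_nonneg by (simp add: mult_left_mono)
  finally have "h r * (- f (v a r)) \<le> h tb * (Cm * b powr (-m) + Cm)"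
    using h_antimono[of tb r] h_pos[of r] h_pos[of tb] f_nonpos[of "v a r"] assms eps_lt_T
    by (intro mult_mono) auto
  then show ?thesis by (simp add: algebra_simps)
qed

lemma flux_recovery_bound:
  assumes tb: "0 < tb" "tb \<le> t2" "t2 \<le> \<epsilon>" "v a tb = \<beta>" and "0 < g"
    and below: "\<And>r. tb \<le> r \<Longrightarrow> r \<le> t2 \<Longrightarrow> flux r \<le> - g"
  shows "(flux t2 - flux tb) * g powr (1/(p-1)) \<le> h tb * (Cm * (\<beta> powr (1-m)/(1-m) + \<beta>))"
proof -
  define w where "w = g powr (1/(p-1))"
  define \<nu> where "\<nu> = v a t2"
  define \<eta> where "\<eta> = h tb"
  have w: "0 < w" using \<open>0 < g\<close> by (simp add: w_def)
  have \<nu>: "0 < \<nu>" using v_pos tb by (simp add: \<nu>_def)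
  have \<eta>: "0 < \<eta>" using h_pos tb eps_lt_T by (simp add: \<eta>_def)
  have profile: "\<nu> + w * (t2 - r) \<le> v a r" "v a r \<le> \<beta>" if "tb \<le> r" "r \<le> t2" for r
    using descent_profile[OF tb less_imp_le[OF \<open>0 < g\<close>] _ that] below unfolding w_def \<nu>_def
    by blast+
  have span: "t2 - tb \<le> \<beta> / w" using profile(1)[of tb] tb \<nu> w by (simp add: field_simps)
  define J where "J = ((\<nu> + w * (t2 - tb)) powr (1-m) - \<nu> powr (1-m)) / (w * (1-m))"
  have J_le: "J \<le> \<beta> powr (1-m) / (w * (1-m))"
  proof -
    have "(\<nu> + w * (t2 - tb)) powr (1-m) \<le> \<beta> powr (1-m)"
      using profile[of tb] tb \<nu> w m_lt_1 by (intro powr_mono2) (auto simp: add_pos_nonneg)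
    then have "(\<nu> + w * (t2 - tb)) powr (1-m) - \<nu> powr (1-m) \<le> \<beta> powr (1-m)"
      using powr_ge_zero[of \<nu> "1-m"] by linarith
    then show ?thesis unfolding J_def using w m_lt_1 by (intro divide_right_mono) auto
  qed
  have majorant: "((\<lambda>r. \<eta> * Cm * (\<nu> + w * (t2 - r)) powr (-m) + \<eta> * Cm) has_integral
      (\<eta> * Cm * J + (t2 - tb) * (\<eta> * Cm))) {tb..t2}"
  proof (rule has_integral_add)
    show "((\<lambda>r. \<eta> * Cm * (\<nu> + w * (t2 - r)) powr (-m)) has_integral \<eta> * Cm * J) {tb..t2}"
      unfolding J_def using tb \<nu> w m_lt_1 by (intro has_integral_mult_right has_integral_powr_affine) auto
    show "((\<lambda>r. \<eta> * Cm) has_integral (t2 - tb) * (\<eta> * Cm)) {tb..t2}"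
      using has_integral_const_real[of "\<eta> * Cm" tb t2] tb by simp
  qed
  have "flux t2 - flux tb = integral {tb..t2} (\<lambda>r. - (h r * f (v a r)))"
    using flux_diff[of tb t2] tb eps_lt_T by (simp add: integral_neg)
  also have "\<dots> \<le> \<eta> * Cm * J + (t2 - tb) * (\<eta> * Cm)"
  proof (rule has_integral_le[OF integrable_integral majorant])
    show "(\<lambda>r. - (h r * f (v a r))) integrable_on {tb..t2}"
      using forcing_integrable_on[of tb t2] tb eps_lt_T by (simp add: integrable_neg)
    fix r assume "r \<in> {tb..t2}"
    then have r: "tb \<le> r" "r \<le> t2" by auto
    show "- (h r * f (v a r)) \<le> \<eta> * Cm * (\<nu> + w * (t2 - r)) powr (-m) + \<eta> * Cm"
      unfolding \<eta>_def using \<nu> w r tb profile[OF r]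
      by (intro singular_forcing_le) (auto simp: add_pos_nonneg)
  qed
  also have "\<dots> \<le> \<eta> * Cm * (\<beta> powr (1-m) / (w * (1-m))) + (\<beta> / w) * (\<eta> * Cm)"
    using J_le span \<eta> Cm_nonneg by (intro add_mono mult_left_mono mult_right_mono) auto
  also have "\<dots> = \<eta> * (Cm * (\<beta> powr (1-m)/(1-m) + \<beta>)) / w"
    using w m_lt_1 by (simp add: field_simps)
  finally show ?thesis using w by (simp add: w_def \<eta>_def field_simps)
qed

lemma positive_trajectory_absurd: False
proof -
  obtain s1 where s1: "0 < s1" "s1 \<le> \<epsilon>/4" "v a s1 = \<beta>" "a powr (p-1) \<le> flux s1"
    by (rule reaches_beta_early)
  obtain u where u: "s1 < u" "u \<le> \<epsilon>/2" "flux u = 0" "\<And>t. s1 \<le> t \<Longrightarrow> t \<le> u \<Longrightarrow> 0 \<le> flux t"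
    using flux_vanishes[OF s1] by blast
  define A where "A = v a u"
  have "Astar \<le> A" unfolding A_def
    by (rule amplitude_large[OF s1(1,3,4)]) (use u eps_pos a_pos in auto)
  then have amp: "large_amplitude \<epsilon> A" by (rule amplitude)
  then have A: "0 < A" using beta_pos by (simp add: large_amplitude_def)
  obtain tb where tb: "u < tb" "tb \<le> 5*\<epsilon>/8" "v a tb = \<beta>"
    and flux_tb: "(decay_rate l (h tb) A * A / 2) powr ((p-1)/p) \<le> - flux tb"
    using returns_to_beta[OF _ u(2,3)] \<open>Astar \<le> A\<close> u(1) s1(1) unfolding A_def by auto
  have tb_pos: "0 < tb" and tb_le: "tb \<le> \<epsilon>" using tb u s1 eps_pos by auto
  have h_tb: "h \<epsilon> \<le> h tb" "0 < h tb" using h_eps_le[OF tb_pos tb_le] h_eps_pos by auto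
  define g where "g = - flux tb / 2"
  have flux_tb': "(decay_rate l (h tb) A * A / 2) powr ((p-1)/p) \<le> 2 * g" using flux_tb by (simp add: g_def)
  have "0 < (decay_rate l (h tb) A * A / 2) powr ((p-1)/p)" using h_tb A by (simp add: decay_rate_def)
  then have g: "0 < g" using flux_tb' by linarith
  have "0 < descent_speed p l (h \<epsilon>) A"
    using descent_speed_eq[OF p_gt_1 h_eps_pos A] A h_eps_pos by simp
  then have "\<beta> \<le> descent_speed p l (h \<epsilon>) A * (3*\<epsilon>/8)"
    using amp by (simp add: large_amplitude_def pos_divide_le_eq mult.commute)
  also have "\<dots> \<le> g powr (1/(p-1)) * (\<epsilon> - tb)"
    using descent_speed_le[OF p_gt_1 h_eps_pos h_tb(1) A flux_tb'] tb eps_pos by (intro mult_mono) auto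
  finally obtain t2 where t2: "tb < t2" "t2 \<le> \<epsilon>" "flux t2 = - g"
    and below: "\<And>r. tb \<le> r \<Longrightarrow> r \<le> t2 \<Longrightarrow> flux r \<le> - g"
    using flux_recovers[OF tb_pos tb_le tb(3) g] g by (auto simp: g_def)
  have "g * g powr (1/(p-1)) \<le> h tb * (Cm * (\<beta> powr (1-m)/(1-m) + \<beta>))"
    using flux_recovery_bound[OF tb_pos less_imp_le[OF t2(1)] t2(2) tb(3) g below] t2(3)
    by (simp add: g_def)
  from amplitude_le_of_flux_recovery[OF p_gt_1 h_tb(2) A g _ this] flux_tb
  have "(A/2) powr l / 2 * A \<le> 2 powr (2 + 1/(p-1)) * (Cm * (\<beta> powr (1-m)/(1-m) + \<beta>))"
    by (simp add: g_def)
  then show False using amp by (simp add: large_amplitude_def)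
qed

end

context shooting
begin

lemma eventually_nonpositive_before:
  assumes "0 < \<epsilon>" "\<epsilon> < T"
  shows "eventually (\<lambda>a. \<exists>t. 0 < t \<and> t \<le> \<epsilon> \<and> v a t \<le> 0) at_top"
proof -
  obtain Astar where amplitude: "\<And>A. Astar \<le> A \<Longrightarrow> large_amplitude \<epsilon> A"
    using eventually_large_amplitude[of \<epsilon>] assms by (auto simp: eventually_at_top_linorder)
  from eventually_large_slope[OF assms(1), of Astar] eventually_gt_at_top[of 0]
  show ?thesis
  proof eventually_elim
    case (elim a)
    show ?case
    proof (rule ccontr)
      assume "\<nexists>t. 0 < t \<and> t \<le> \<epsilon> \<and> v a t \<le> 0"
      then have pos: "\<And>t. 0 < t \<Longrightarrow> t \<le> \<epsilon> \<Longrightarrow> 0 < v a t" by (meson not_le)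
      obtain dv where "trajectory p \<beta> l m M1 Cf Cm f T C1 e1 h v a dv"
        using trajectory_exists elim(2) by blast
      then interpret positive_trajectory p \<beta> l m M1 Cf Cm f T C1 e1 h v a dv \<epsilon> Astar
        using assms pos amplitude elim(1)
        by (simp add: positive_trajectory_def positive_trajectory_axioms_def)
      show False by (rule positive_trajectory_absurd)
    qed
  qed
qed

lemma first_zero_exists:
  assumes "0 < a" "0 < t0" "t0 < T" "v a t0 \<le> 0"
  obtains z where "0 < z" "z \<le> t0" "v a z = 0" "\<And>t. 0 < t \<Longrightarrow> t < z \<Longrightarrow> 0 < v a t"
proof -
  obtain dv where traj: "trajectory p \<beta> l m M1 Cf Cm f T C1 e1 h v a dv"
    using trajectory_exists assms(1) by blast
  interpret trajectory p \<beta> l m M1 Cf Cm f T C1 e1 h v a dv by (fact traj)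
  obtain \<delta> where \<delta>: "0 < \<delta>" "\<And>t. 0 < t \<Longrightarrow> t \<le> \<delta> \<Longrightarrow> 0 < v a t"
    using positive_near_0 by blast
  have "\<delta> < t0" using \<delta>(2)[of t0] assms by force
  then obtain z where z: "\<delta> < z" "z \<le> t0" "v a z = 0" and before: "\<forall>t. \<delta> \<le> t \<and> t < z \<longrightarrow> 0 < v a t"
    using first_crossing_below[of \<delta> t0 "v a" 0] v_cont_on[of \<delta> t0] \<delta> assms by auto
  show ?thesis
  proof (rule that)
    show "0 < v a t" if "0 < t" "t < z" for t using \<delta>(2)[of t] before that by (cases "t \<le> \<delta>") auto
  qed (use z \<delta> in auto)
qed

lemma first_zero_tendsto_0:
  "\<exists>A>0. \<exists>z :: real \<Rightarrow> real.
     (\<forall>a\<ge>A. 0 < z a \<and> z a < T \<and> v a (z a) = 0 \<and> (\<forall>t. 0 < t \<and> t < z a \<longrightarrow> v a t > 0)) \<and>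
     (z \<longlongrightarrow> 0) at_top"
proof -
  define first_zero where "first_zero a \<tau> \<longleftrightarrow>
    0 < \<tau> \<and> \<tau> < T \<and> v a \<tau> = 0 \<and> (\<forall>t. 0 < t \<and> t < \<tau> \<longrightarrow> 0 < v a t)" for a \<tau>
  define z where "z a = (SOME \<tau>. first_zero a \<tau>)" for a
  have z_le: "first_zero a (z a) \<and> z a \<le> t0" if hyp: "0 < a" "0 < t0" "t0 < T" "v a t0 \<le> 0" for a t0
  proof -
    obtain \<tau> where "0 < \<tau>" "\<tau> \<le> t0" "v a \<tau> = 0" "\<And>t. 0 < t \<Longrightarrow> t < \<tau> \<Longrightarrow> 0 < v a t"
      using first_zero_exists[OF hyp] by blast
    then have "first_zero a \<tau>" using hyp by (auto simp: first_zero_def)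
    then have z: "first_zero a (z a)" unfolding z_def by (rule someI)
    then have "z a \<le> t0" using hyp by (force simp: first_zero_def)
    with z show ?thesis by simp
  qed
  have eventually_z: "eventually (\<lambda>a. first_zero a (z a) \<and> z a \<le> \<epsilon>) at_top" if "0 < \<epsilon>" "\<epsilon> < T" for \<epsilon>
    using eventually_nonpositive_before[OF that] eventually_gt_at_top[of 0]
    by eventually_elim (use z_le that in fastforce)
  obtain A where A: "\<And>a. A \<le> a \<Longrightarrow> first_zero a (z a)"
    using eventually_z[of "T/2"] T_pos by (auto simp: eventually_at_top_linorder)
  have "(z \<longlongrightarrow> 0) at_top"
  proof (rule tendstoI)
    fix e :: real assume "0 < e"
    then have "eventually (\<lambda>a. first_zero a (z a) \<and> z a \<le> min (e/2) (T/2)) at_top"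
      using T_pos by (intro eventually_z) auto
    then show "eventually (\<lambda>a. dist (z a) 0 < e) at_top"
      by eventually_elim (use \<open>0 < e\<close> in \<open>auto simp: first_zero_def\<close>)
  qed
  then show ?thesis
    using A by (intro exI[of _ "max A 1"] exI[of _ z]) (auto simp: first_zero_def)
qed

end

section \<open>The radial weight and the nonlinearity\<close>

lemma f_superlinear_bounds:
  fixes f g1 :: "real \<Rightarrow> real" and l \<beta> :: real
  assumes f_cont: "continuous_on (- {0}) f" and "0 < \<beta>"
    and H1_eq: "\<exists>M. \<forall>u. \<bar>u\<bar> \<ge> M \<longrightarrow> f u = \<bar>u\<bar> powr (l - 1) * u + g1 u"
    and H1_lim: "((\<lambda>u. \<bar>g1 u\<bar> / \<bar>u\<bar> powr l) \<longlongrightarrow> 0) at_top"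
  obtains M1 Cf where "0 < M1" "\<And>x. M1 \<le> x \<Longrightarrow> x powr l / 2 \<le> f x"
    "0 \<le> Cf" "\<And>x. \<beta> \<le> x \<Longrightarrow> f x \<le> 2 * x powr l + Cf"
proof -
  obtain M where M: "\<And>u. \<bar>u\<bar> \<ge> M \<Longrightarrow> f u = \<bar>u\<bar> powr (l - 1) * u + g1 u" using H1_eq by blast
  obtain N1 where N1: "\<And>u. u \<ge> N1 \<Longrightarrow> \<bar>g1 u\<bar> / \<bar>u\<bar> powr l < 1/2"
    using order_tendstoD(2)[OF H1_lim, of "1/2"] unfolding eventually_at_top_linorder by auto
  define M1 where "M1 = max (max M N1) 1"
  have M1: "x powr l / 2 \<le> f x \<and> f x \<le> 2 * x powr l" if "M1 \<le> x" for x
  proof -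
    have x: "0 < x" "M \<le> x" "N1 \<le> x" using that by (auto simp: M1_def)
    have "f x = x powr (l - 1) * x powr 1 + g1 x" using M[of x] x by simp
    also have "x powr (l - 1) * x powr 1 = x powr (l - 1 + 1)" by (rule powr_add[symmetric])
    finally have "f x = x powr l + g1 x" by simp
    moreover have "\<bar>g1 x\<bar> < x powr l / 2" using N1[of x] x by (simp add: field_simps)
    ultimately show ?thesis by (simp add: abs_less_iff) (smt (verit) powr_ge_zero)
  qed
  have "continuous_on {\<beta>..M1} f" using \<open>0 < \<beta>\<close> by (auto intro: continuous_on_subset[OF f_cont])
  then obtain B where B: "0 \<le> B" "\<And>x. x \<in> {\<beta>..M1} \<Longrightarrow> \<bar>f x\<bar> \<le> B"
    using continuous_on_compact_bound[of "{\<beta>..M1}" f] by auto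
  have "f x \<le> 2 * x powr l + B" if "\<beta> \<le> x" for x
  proof (cases "M1 \<le> x")
    case True
    then show ?thesis using M1[of x] B(1) by linarith
  next
    case False
    then have "f x \<le> B" using B(2)[of x] that by (simp add: abs_le_iff)
    then show ?thesis using powr_ge_zero[of x l] by linarith
  qed
  moreover have "0 < M1" by (simp add: M1_def)
  ultimately show ?thesis using that M1 B(1) by blast
qed

lemma f_singular_bound:
  fixes f g2 :: "real \<Rightarrow> real" and m \<beta> :: real
  assumes f_cont: "continuous_on (- {0}) f" and g2_cont: "continuous_on UNIV g2" and "0 < \<beta>"
    and H2_eq: "\<exists>\<delta>>0. \<forall>u. u \<noteq> 0 \<and> \<bar>u\<bar> < \<delta> \<longrightarrow> f u = - 1 / (\<bar>u\<bar> powr (m - 1) * u) + g2 u"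
  obtains Cm where "0 \<le> Cm" "\<And>x. 0 < x \<Longrightarrow> x \<le> \<beta> \<Longrightarrow> - f x \<le> Cm * x powr (-m) + Cm"
proof -
  obtain \<delta> where \<delta>: "\<delta> > 0" "\<And>u. u \<noteq> 0 \<Longrightarrow> \<bar>u\<bar> < \<delta> \<Longrightarrow> f u = - 1 / (\<bar>u\<bar> powr (m - 1) * u) + g2 u"
    using H2_eq by blast
  obtain Bg where Bg: "0 \<le> Bg" "\<And>x. x \<in> {0..\<delta>} \<Longrightarrow> \<bar>g2 x\<bar> \<le> Bg"
    using continuous_on_compact_bound[of "{0..\<delta>}" g2] continuous_on_subset[OF g2_cont] by auto
  have "continuous_on {\<delta>..\<beta>} f" using \<delta>(1) by (auto intro: continuous_on_subset[OF f_cont])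
  then obtain Bf where Bf: "0 \<le> Bf" "\<And>x. x \<in> {\<delta>..\<beta>} \<Longrightarrow> \<bar>f x\<bar> \<le> Bf"
    using continuous_on_compact_bound[of "{\<delta>..\<beta>}" f] by auto
  define Cm where "Cm = max 1 (max Bg Bf)"
  have bound: "- f x \<le> Cm * x powr (-m) + Cm" if x: "0 < x" "x \<le> \<beta>" for x
  proof (cases "x < \<delta>")
    case True
    have "\<bar>x\<bar> powr (m - 1) * x = x powr (m - 1) * x powr 1" using x by simp
    also have "\<dots> = x powr (m - 1 + 1)" by (rule powr_add[symmetric])
    finally have "f x = - (x powr (-m)) + g2 x" using \<delta>(2)[of x] True x by (simp add: powr_minus_divide)
    moreover have "\<bar>g2 x\<bar> \<le> Cm" using Bg(2)[of x] True x by (simp add: Cm_def)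
    moreover have "x powr (-m) \<le> Cm * x powr (-m)"
      using mult_right_mono[of 1 Cm "x powr (-m)"] by (simp add: Cm_def)
    ultimately show ?thesis by linarith
  next
    case False
    then have "\<bar>f x\<bar> \<le> Cm" using Bf(2)[of x] x by (simp add: Cm_def)
    moreover have "0 \<le> Cm * x powr (-m)" by (simp add: Cm_def)
    ultimately show ?thesis by linarith
  qed
  show ?thesis
  proof (rule that)
    show "0 \<le> Cm" by (simp add: Cm_def)
  qed (rule bound)
qed

lemma T_of_powr:
  fixes n p R :: real
  assumes "1 < p" "p < n" "0 < R"
  shows "0 < T_of n p R"
    and "\<And>t. 0 < t \<Longrightarrow> t \<le> T_of n p R \<Longrightarrow> R \<le> t powr ((p-1)/(p-n))"
    and "\<And>t. 0 < t \<Longrightarrow> t < T_of n p R \<Longrightarrow> R < t powr ((p-1)/(p-n))"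
proof -
  show "0 < T_of n p R" using assms by (simp add: T_of_def)
  have "(p - n) / (p - 1) * ((p - 1) / (p - n)) = 1" using assms by simp
  then have TR: "T_of n p R powr ((p-1)/(p-n)) = R"
    using assms by (simp add: T_of_def powr_powr)
  have j: "(p-1)/(p-n) < 0" using assms by (simp add: divide_pos_neg)
  show "R \<le> t powr ((p-1)/(p-n))" if "0 < t" "t \<le> T_of n p R" for t
    using powr_mono2'[of "(p-1)/(p-n)" t "T_of n p R"] that j TR by simp
  show "R < t powr ((p-1)/(p-n))" if "0 < t" "t < T_of n p R" for t
    using powr_less_mono2_neg[of "(p-1)/(p-n)" t "T_of n p R"] that j TR by simp
qed

lemma h_of_le_powr:
  fixes n p R K1 \<alpha>1 K0 \<alpha> :: real
  assumes p: "1 < p" "p < n" and R: "0 < R"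
    and K_bounds: "\<forall>r\<ge>R. K0 / r powr \<alpha> \<le> K r \<and> K r \<le> K1 / r powr \<alpha>1"
    and t: "0 < t" "t \<le> T_of n p R"
  shows "h_of n p K t \<le> (((n - p)/(p - 1)) powr (-p) * K1) * t powr (p*(n-1)/(p-n) - (p-1)/(p-n) * \<alpha>1)"
proof -
  define j where "j = (p-1)/(p-n)"
  define k where "k = p*(n-1)/(p-n)"
  define C0 where "C0 = ((n - p)/(p - 1)) powr (-p)"
  have "R \<le> t powr j" using T_of_powr(2)[OF p R t] by (simp add: j_def)
  then have "K (t powr j) \<le> K1 / (t powr j) powr \<alpha>1" using K_bounds by simp
  then have "K (t powr j) \<le> K1 / t powr (j * \<alpha>1)" by (simp add: powr_powr)
  then have "C0 * t powr k * K (t powr j) \<le> C0 * t powr k * (K1 / t powr (j * \<alpha>1))"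
    by (intro mult_left_mono) (auto simp: C0_def)
  moreover have "h_of n p K t = C0 * t powr k * K (t powr j)" by (simp add: h_of_def C0_def k_def j_def)
  ultimately have "h_of n p K t \<le> C0 * t powr k * (K1 / t powr (j * \<alpha>1))" by simp
  also have "\<dots> = (C0 * K1) * t powr (k - j * \<alpha>1)" using t by (simp add: powr_diff)
  finally show ?thesis by (simp add: C0_def k_def j_def)
qed

lemma h_of_exponent_gt:
  fixes n p \<alpha>1 :: real
  assumes "1 < p" "p < n" "n < \<alpha>1"
  shows "-1 < p*(n-1)/(p-n) - (p-1)/(p-n) * \<alpha>1"
proof -
  have "(p-1)/(p-n) * \<alpha>1 = ((p-1) * \<alpha>1)/(p-n)" by simp
  then have "p*(n-1)/(p-n) - (p-1)/(p-n) * \<alpha>1 = (p*(n-1) - (p-1)*\<alpha>1)/(p-n)"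
    by (simp add: diff_divide_distrib)
  moreover have "p*(n-1) - (p-1)*\<alpha>1 < n - p"
    using mult_strict_left_mono[OF assms(3), of "p-1"] assms(1) by (simp add: algebra_simps)
  ultimately show ?thesis using assms by (simp add: less_divide_eq)
qed

text \<open>Monotonicity of h is the hypothesis r K'(r)/K(r) > -(n-1)p/(p-1) in the variable t:
  with r = t^j, j = (p-1)/(p-n) < 0, one has h(t) = C t^k K(r) where k = j (n-1) p/(p-1), so
  h'(t) = C t^(k-1) (k K(r) + j r K'(r)) < 0.\<close>
lemma h_of_antimono:
  fixes n p R :: real and K K' :: "real \<Rightarrow> real"
  assumes p: "1 < p" "p < n" and R: "0 < R"
    and K_deriv: "\<forall>r\<ge>R. (K has_real_derivative K' r) (at r within {R..})"
    and K_pos: "\<forall>r\<ge>R. K r > 0"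
    and K_ratio: "\<forall>r\<ge>R. r * K' r / K r > - ((n - 1) * p / (p - 1))"
    and st: "0 < s" "s \<le> t" "t < T_of n p R"
  shows "h_of n p K t \<le> h_of n p K s"
proof -
  define j where "j = (p-1)/(p-n)"
  define k where "k = p*(n-1)/(p-n)"
  define C0 where "C0 = ((n - p)/(p - 1)) powr (-p)"
  have C0: "0 < C0" using p by (simp add: C0_def)
  have j: "j < 0" using p by (simp add: j_def divide_pos_neg)
  have jk: "j * ((n - 1) * p / (p - 1)) = k" using p by (simp add: j_def k_def divide_simps)
  have h: "h_of n p K = (\<lambda>x. C0 * x powr k * K (x powr j))"
    by (simp add: h_of_def C0_def k_def j_def fun_eq_iff)
  have "\<exists>y. ((\<lambda>x. C0 * x powr k * K (x powr j)) has_real_derivative y) (at x) \<and> y \<le> 0"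
    if x: "s \<le> x" "x \<le> t" for x
  proof -
    define r where "r = x powr j"
    have x0: "0 < x" using x st by simp
    have rR: "R < r" using T_of_powr(3)[OF p R x0] x st by (simp add: r_def j_def)
    have "at r within {R..} = at r"
      by (rule at_within_open_subset[of r "{R<..}"]) (use rR in auto)
    then have "(K has_real_derivative K' r) (at r)" using K_deriv rR by (metis less_imp_le)
    from DERIV_chain2[OF this[unfolded r_def] has_real_derivative_powr[OF x0, of j]]
    have "((\<lambda>x. C0 * x powr k * K (x powr j)) has_real_derivative
        C0 * (k * x powr (k - 1) * K r + x powr k * (K' r * (j * x powr (j - 1))))) (at x)"
      using has_real_derivative_powr[OF x0, of k] x0
      by (auto intro!: derivative_eq_intros simp: r_def algebra_simps)
    moreover have "x powr k * x powr (j - 1) = x powr (k - 1) * r"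
      by (simp add: r_def flip: powr_add) (simp add: algebra_simps)
    moreover have "k * K r + j * (r * K' r) < 0"
    proof -
      have "- ((n - 1) * p / (p - 1)) * K r < r * K' r"
        using K_ratio K_pos rR by (simp add: less_divide_eq)
      from mult_strict_left_mono_neg[OF this j] show ?thesis
        by (simp add: jk[symmetric] algebra_simps)
    qed
    moreover have "C0 * x powr (k - 1) * (k * K r + j * (r * K' r)) \<le> 0"
      using C0 calculation(3) by (intro mult_nonneg_nonpos) auto
    ultimately show ?thesis
      by (intro exI[of _ "C0 * x powr (k - 1) * (k * K r + j * (r * K' r))"]) (simp add: algebra_simps)
  qed
  from DERIV_nonpos_imp_nonincreasing[OF st(2) this] show ?thesis by (simp add: h)
qed

lemma weight_h_of:
  fixes n p R K0 K1 \<alpha> \<alpha>1 :: real and K K' :: "real \<Rightarrow> real"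
  assumes p: "1 < p" "p < n" and R: "0 < R"
    and K_deriv: "\<forall>r\<ge>R. (K has_real_derivative K' r) (at r within {R..})"
    and K_pos: "\<forall>r\<ge>R. K r > 0"
    and K_ratio: "\<forall>r\<ge>R. r * K' r / K r > - ((n - 1) * p / (p - 1))"
    and "K1 > 0" and K_bounds: "\<forall>r\<ge>R. K0 / r powr \<alpha> \<le> K r \<and> K r \<le> K1 / r powr \<alpha>1"
    and "n < \<alpha>1"
  shows "weight (T_of n p R) (((n - p)/(p - 1)) powr (-p) * K1)
           (p*(n-1)/(p-n) - (p-1)/(p-n) * \<alpha>1) (h_of n p K)"
proof
  show "0 < h_of n p K t" if "0 < t" "t \<le> T_of n p R" for t
    using T_of_powr(2)[OF p R that] K_pos that p by (simp add: h_of_def)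
qed (use assms T_of_powr(1)[OF p R] h_of_antimono[OF p R K_deriv K_pos K_ratio]
      h_of_le_powr[OF p R K_bounds] h_of_exponent_gt[OF p] in \<open>auto simp: h_of_def\<close>)

theorem lemma2p6:
  fixes N :: nat and p l m R \<beta> K0 K1 \<alpha> \<alpha>1 :: real
    and f g1 g2 K K' :: "real \<Rightarrow> real"
    and v :: "real \<Rightarrow> real \<Rightarrow> real"
  assumes N: "N > 2" and p: "1 < p" "p < real N"
    \<comment> \<open>f odd and locally Lipschitz on R \ {0}\<close>
    and f_odd: "\<forall>u. u \<noteq> 0 \<longrightarrow> f (- u) = - f u"
    and f_lip: "loc_lipschitz_on (- {0}) f"
    \<comment> \<open>(H1)\<close>
    and H1_g1: "loc_lipschitz_on UNIV g1" and H1_l: "l > p - 1"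
    and H1_eq: "\<exists>M. \<forall>u. \<bar>u\<bar> \<ge> M \<longrightarrow> f u = \<bar>u\<bar> powr (l - 1) * u + g1 u"
    and H1_lim: "((\<lambda>u. \<bar>g1 u\<bar> / \<bar>u\<bar> powr l) \<longlongrightarrow> 0) at_top"
    \<comment> \<open>(H2)\<close>
    and H2_g2: "loc_lipschitz_on UNIV g2" and H2_g20: "g2 0 = 0"
    and H2_m: "0 < m" "m < 1"
    and H2_eq: "\<exists>\<delta>>0. \<forall>u. u \<noteq> 0 \<and> \<bar>u\<bar> < \<delta> \<longrightarrow>
                   f u = - 1 / (\<bar>u\<bar> powr (m - 1) * u) + g2 u"
    \<comment> \<open>(H3)\<close>
    and H3: "\<beta> > 0" "f \<beta> = 0" "\<forall>u. 0 < u \<and> u < \<beta> \<longrightarrow> f u < 0"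
            "\<forall>u. u > \<beta> \<longrightarrow> f u > 0"
    \<comment> \<open>(H4)\<close>
    and R: "R > 0"
    and K_deriv: "\<forall>r\<ge>R. (K has_real_derivative K' r) (at r within {R..})"
    and K_cont: "continuous_on {R..} K" and K'_cont: "continuous_on {R..} K'"
    and K_pos: "\<forall>r\<ge>R. K r > 0"
    and K_ratio: "\<forall>r\<ge>R. r * K' r / K r > - ((real N - 1) * p / (p - 1))"
    and K01: "K0 > 0" "K1 > 0"
    and K_bounds: "\<forall>r\<ge>R. K0 / r powr \<alpha> \<le> K r \<and> K r \<le> K1 / r powr \<alpha>1"
    and alphas: "real N + m * (real N - p) / (p - 1) < \<alpha>1" "\<alpha>1 \<le> \<alpha>" "\<alpha> < 2 * (real N - 1)"
    \<comment> \<open>v a is the (unique) solution on [0,T] with initial slope a\<close>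
    and v_sol: "\<forall>a>0. is_sol p (h_of (real N) p K) f a (T_of (real N) p R) (v a)"
  shows "\<exists>A>0. \<exists>z :: real \<Rightarrow> real.
           (\<forall>a\<ge>A. 0 < z a \<and> z a < T_of (real N) p R \<and> v a (z a) = 0 \<and>
                   (\<forall>t. 0 < t \<and> t < z a \<longrightarrow> v a t > 0)) \<and>
           (z \<longlongrightarrow> 0) at_top"
proof -
  have f_cont: "continuous_on (- {0}) f" by (rule loc_lipschitz_on_continuous_on[OF f_lip]) auto
  have g2_cont: "continuous_on UNIV g2" by (rule loc_lipschitz_on_continuous_on[OF H2_g2]) auto
  obtain M1 Cf where large: "0 < M1" "\<And>x. M1 \<le> x \<Longrightarrow> x powr l / 2 \<le> f x"
      "0 \<le> Cf" "\<And>x. \<beta> \<le> x \<Longrightarrow> f x \<le> 2 * x powr l + Cf"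
    using f_superlinear_bounds[OF f_cont H3(1) H1_eq H1_lim] by blast
  obtain Cm where small: "0 \<le> Cm" "\<And>x. 0 < x \<Longrightarrow> x \<le> \<beta> \<Longrightarrow> - f x \<le> Cm * x powr (-m) + Cm"
    using f_singular_bound[OF f_cont g2_cont H3(1) H2_eq] by blast
  have "nonlinearity p \<beta> l m M1 Cf Cm f"
    using p H1_l H2_m H3 large small by unfold_locales (auto simp: le_less)
  moreover have "real N < \<alpha>1" using alphas(1) H2_m p by (smt (verit) divide_nonneg_pos mult_nonneg_nonneg)
  then have "weight (T_of (real N) p R) (((real N - p)/(p - 1)) powr (-p) * K1)
      (p*(real N-1)/(p-real N) - (p-1)/(p-real N) * \<alpha>1) (h_of (real N) p K)"
    by (rule weight_h_of[OF p R K_deriv K_pos K_ratio K01(2) K_bounds])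
  ultimately interpret shooting p \<beta> l m M1 Cf Cm f "T_of (real N) p R"
    "((real N - p)/(p - 1)) powr (-p) * K1" "p*(real N-1)/(p-real N) - (p-1)/(p-real N) * \<alpha>1"
    "h_of (real N) p K" v
    using v_sol by (simp add: shooting_def shooting_axioms_def)
  show ?thesis by (rule first_zero_tendsto_0)
qed

end
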